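(* Let $n\ge2$ and $\beta\in(0,\infty)^3$ with $\beta_0\le\beta_1\le\beta_2$. Then for any $x,y\in\mathbb{N}^n$ with $x\le y$ (coordinatewise) there exists a coupling of two processes $(X^n_t)_{t\ge0}$ and $(Y^n_t)_{t\ge0}$ with laws $\mathbb{P}_x$ and $\mathbb{P}_y$ respectively such that almost surely $X^n_t\le Y^n_t$ coordinatewise for all $t\ge0$.
   Context: Fix $n\ge2$ and $\beta=(\beta_0,\beta_1,\beta_2)\in(0,\infty)^3$. For $x\in\mathbb{N}^n$, with the zero boundary convention $x(0)=x(n+1)=0$, let $V_j(x)=\mathbf 1_{\{x(j-1)>x(j)\}}+\mathbf 1_{\{x(j+1)>x(j)\}}\in\{0,1,2\}$. The crystal process $X^n$ with $n$ sites and parameter $\beta$ is the continuous-time Markov chain on $\mathbb{N}^n$ jumping from $x$ to $x+e_j$ at rate $\beta_{V_j(x)}$ ($j=1,\dots,n$) with no other transitions; $\mathbb{P}_x$ is its law started at $x$. *)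

theory Defs
  imports "HOL-Probability.Probability"
begin

text \<open>States of the crystal process with n sites: functions nat => nat that vanish
outside the sites 1..n (so that x 0 = x (n+1) = 0, the zero boundary convention).\<close>

definition crystal_states :: "nat \<Rightarrow> (nat \<Rightarrow> nat) set" where
  "crystal_states n = {x. \<forall>j. (j = 0 \<or> n < j) \<longrightarrow> x j = 0}"

definition crystal_V :: "nat \<Rightarrow> (nat \<Rightarrow> nat) \<Rightarrow> nat" where
  "crystal_V j x = (if x (j - 1) > x j then 1 else 0) + (if x (j + 1) > x j then 1 else 0)"

text \<open>Matrix entries of the k-th power of the generator Q, where
Q(x, x + e_j) = beta(V_j x) for j in 1..n and Q(x,x) = - sum of these rates.\<close>

fun crystal_Qpow :: "nat \<Rightarrow> (nat \<Rightarrow> real) \<Rightarrow> nat \<Rightarrow> (nat \<Rightarrow> nat) \<Rightarrow> (nat \<Rightarrow> nat) \<Rightarrow> real" where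
  "crystal_Qpow n \<beta> 0 x y = (if x = y then 1 else 0)"
| "crystal_Qpow n \<beta> (Suc k) x y =
     (\<Sum>j\<in>{1..n}. \<beta> (crystal_V j x) *
        (crystal_Qpow n \<beta> k (x(j := x j + 1)) y - crystal_Qpow n \<beta> k x y))"

text \<open>Transition probabilities P_t(x,y) = exp(tQ)(x,y) (rates are bounded, so the chain
is non-explosive and its transition function is the exponential of the generator).\<close>

definition crystal_P :: "nat \<Rightarrow> (nat \<Rightarrow> real) \<Rightarrow> real \<Rightarrow> (nat \<Rightarrow> nat) \<Rightarrow> (nat \<Rightarrow> nat) \<Rightarrow> real" where
  "crystal_P n \<beta> t x y = (\<Sum>k. t ^ k / fact k * crystal_Qpow n \<beta> k x y)"

text \<open>X is (a version of) the crystal process with n sites and parameter beta, started at x,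
on the probability space M: each X t is a random variable, the finite-dimensional
distributions are those of the Markov chain with transition function crystal_P started at x,
and almost every path is cadlag (piecewise constant, right-continuous with left limits in the
discrete topology). This determines the law P_x on path space.\<close>

definition crystal_process ::
  "nat \<Rightarrow> (nat \<Rightarrow> real) \<Rightarrow> 'w measure \<Rightarrow> (real \<Rightarrow> 'w \<Rightarrow> (nat \<Rightarrow> nat)) \<Rightarrow> (nat \<Rightarrow> nat) \<Rightarrow> bool" where
  "crystal_process n \<beta> M X x \<longleftrightarrow>
     (\<forall>t\<ge>0. X t \<in> measurable M (count_space UNIV)) \<and>
     (\<forall>ts ys. sorted_wrt (<) ts \<longrightarrow> (\<forall>t\<in>set ts. 0 \<le> t) \<longrightarrow> length ys = length ts \<longrightarrow>
        measure M {\<omega> \<in> space M. \<forall>i<length ts. X (ts ! i) \<omega> = ys ! i} =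
        (\<Prod>i<length ts. crystal_P n \<beta>
             (ts ! i - (if i = 0 then 0 else ts ! (i - 1)))
             (if i = 0 then x else ys ! (i - 1)) (ys ! i))) \<and>
     (AE \<omega> in M.
        (\<forall>t\<ge>0. \<exists>\<epsilon>>0. \<forall>s. t \<le> s \<and> s < t + \<epsilon> \<longrightarrow> X s \<omega> = X t \<omega>) \<and>
        (\<forall>t>0. \<exists>\<epsilon>>0. \<forall>s r. t - \<epsilon> < s \<and> s < t \<and> t - \<epsilon> < r \<and> r < t \<longrightarrow> X s \<omega> = X r \<omega>))"

end

theory Submission
  imports Defs
begin

text \<open>With \<open>\<lambda> = n \<beta>(2)\<close>, the generator of the crystal process is \<open>Q = \<lambda> (K - I)\<close>, where the
Markov kernel \<open>K\<close> picks a site \<open>j\<close> uniformly and a level \<open>v \<in> {0, 1, 2}\<close> with probability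
\<open>(\<beta>(v) - \<beta>(v - 1)) / \<beta>(2)\<close> (with \<open>\<beta>(-1) = 0\<close>), and raises site \<open>j\<close> iff \<open>v \<le> V_j(x)\<close>. The
level probabilities are nonnegative because \<open>\<beta>\<close> is nondecreasing. Hence
\<open>exp (t Q) = e^(-\<lambda> t) \<Sum>_i (\<lambda> t)^i / i! K^i\<close>, which is realized by a single i.i.d. sequence of pairs
(Exp(\<open>\<lambda>\<close>) holding time, mark), the marks being applied at the successive arrivals; a first-step
analysis shows that this path has the finite-dimensional distributions of \<open>exp (t Q)\<close>.

Driving the processes started at \<open>x \<le> y\<close> with the same sequence gives the coupling. A mark
\<open>(j, v)\<close> could break the order only by raising site \<open>j\<close> for \<open>x\<close> but not for \<open>y\<close>, i.e. if
\<open>V_j(y) < v \<le> V_j(x)\<close>. This is impossible when \<open>x_j = y_j\<close>, since then the neighbours of \<open>y\<close> are at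
least those of \<open>x\<close>; so \<open>x_j < y_j\<close> and the order survives the jump.\<close>

lemma sum_atLeastAtMost_0_2: "(\<Sum>v\<in>{0..2::nat}. f v) = f 0 + f 1 + (f 2 :: 'a :: comm_monoid_add)"
proof -
  have "{0..2::nat} = {0, 1, 2}" by auto
  then show ?thesis by (simp add: add.assoc)
qed

lemma exp_series_sums: "(\<lambda>j. x ^ j / fact j) sums exp (x :: real)"
  using exp_converges[of x] by (simp add: divide_inverse_commute scaleR_conv_of_real)

lemma summable_norm_exp_series_bounded:
  assumes "\<And>i. \<bar>c i\<bar> \<le> 1"
  shows "summable (\<lambda>i. norm (x ^ i / fact i * c i :: real))"
proof (rule summable_comparison_test)
  show "\<exists>N. \<forall>i\<ge>N. norm (norm (x ^ i / fact i * c i)) \<le> \<bar>x\<bar> ^ i / fact i"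
    using assms by (auto simp: abs_mult power_abs divide_simps intro!: mult_left_le)
  show "summable (\<lambda>i. \<bar>x\<bar> ^ i / fact i)"
    using exp_series_sums by (rule sums_summable)
qed

lemma eq_if_within_powers:
  fixes g c r :: real
  assumes "0 \<le> r" "r < 1" and "\<And>k. g \<le> c + r ^ k" "\<And>k. c \<le> g + r ^ k"
  shows "g = c"
proof -
  have "(\<lambda>k. c + r ^ k) \<longlonglongrightarrow> c + 0" "(\<lambda>k. g + r ^ k) \<longlonglongrightarrow> g + 0"
    using assms(1,2) by (intro tendsto_add tendsto_const LIMSEQ_power_zero; simp)+
  then have "g \<le> c" "c \<le> g"
    using assms(3,4) by (auto intro: LIMSEQ_le_const[where a=g] LIMSEQ_le_const[where a=c])
  then show ?thesis by simp
qed

lemma nn_integral_exponential_density: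
  assumes "0 < l"
  shows "(\<integral>\<^sup>+e. ennreal (exponential_density l e) \<partial>lborel) = 1"
proof -
  have "emeasure (density lborel (\<lambda>e. ennreal (exponential_density l e))) UNIV = 1"
    using prob_space.emeasure_space_1[OF prob_space_exponential_density[OF assms]] by simp
  then show ?thesis by (subst (asm) emeasure_density) auto
qed

lemma sorted_wrt_zip_fst:
  "sorted_wrt (<) ts \<Longrightarrow> sorted_wrt (\<lambda>p q. fst p < fst q) (zip ts ys)"
proof (induction ts arbitrary: ys)
  case (Cons t ts)
  then show ?case by (cases ys) (auto dest: set_zip_leftD)
qed simp

lemma crystal_V_mono:
  assumes "a j = b j" "a (j - 1) \<le> b (j - 1)" "a (j + 1) \<le> b (j + 1)"
  shows "crystal_V j a \<le> crystal_V j b"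
  using assms unfolding crystal_V_def by auto

locale crystal_uniformization =
  fixes n :: nat and \<beta> :: "nat \<Rightarrow> real"
  assumes sites_pos: "1 \<le> n" and rate0_pos: "0 < \<beta> 0"
    and rate01: "\<beta> 0 \<le> \<beta> 1" and rate12: "\<beta> 1 \<le> \<beta> 2"
begin

section \<open>Uniformization of the generator\<close>

definition urate :: real where "urate = real n * \<beta> 2"

definition marks :: "(nat \<times> nat) set" where "marks = {1..n} \<times> {0..2}"

definition mark_weight :: "nat \<times> nat \<Rightarrow> real" where
  "mark_weight m =
     (if m \<in> marks then (\<beta> (snd m) - (if snd m = 0 then 0 else \<beta> (snd m - 1))) / urate else 0)"

definition fire :: "(nat \<Rightarrow> nat) \<Rightarrow> nat \<times> nat \<Rightarrow> (nat \<Rightarrow> nat)" where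
  "fire a m = (if m \<in> marks \<and> snd m \<le> crystal_V (fst m) a then a(fst m := a (fst m) + 1) else a)"

definition jump_op :: "((nat \<Rightarrow> nat) \<Rightarrow> real) \<Rightarrow> (nat \<Rightarrow> nat) \<Rightarrow> real" where
  "jump_op g a = (\<Sum>m\<in>marks. mark_weight m * g (fire a m))"

definition gen_op :: "((nat \<Rightarrow> nat) \<Rightarrow> real) \<Rightarrow> (nat \<Rightarrow> nat) \<Rightarrow> real" where
  "gen_op g a = urate * (jump_op g a - g a)"

definition skel_prob :: "nat \<Rightarrow> (nat \<Rightarrow> nat) \<Rightarrow> (nat \<Rightarrow> nat) \<Rightarrow> real" where
  "skel_prob i a b = (jump_op ^^ i) (\<lambda>c. if c = b then 1 else 0) a"

definition unif_prob :: "real \<Rightarrow> (nat \<Rightarrow> nat) \<Rightarrow> (nat \<Rightarrow> nat) \<Rightarrow> real" where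
  "unif_prob d a b = exp (- urate * d) * (\<Sum>i. (urate * d) ^ i / fact i * skel_prob i a b)"

lemma urate_pos: "0 < urate"
  unfolding urate_def using sites_pos rate0_pos rate01 rate12 by simp

lemma finite_marks [simp]: "finite marks"
  by (simp add: marks_def)

lemma mark_weight_nonneg: "0 \<le> mark_weight m"
  using urate_pos rate0_pos rate01 rate12 unfolding mark_weight_def marks_def
  by (auto simp: divide_simps le_Suc_eq numeral_2_eq_2)

lemma mark_weight_site:
  assumes "j \<in> {1..n}"
  shows "mark_weight (j, 0) = \<beta> 0 / urate" "mark_weight (j, Suc 0) = (\<beta> 1 - \<beta> 0) / urate"
    "mark_weight (j, 2) = (\<beta> 2 - \<beta> 1) / urate"
  using assms by (simp_all add: mark_weight_def marks_def)

lemma sum_mark_weight: "(\<Sum>m\<in>marks. mark_weight m) = 1"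
proof -
  have "(\<Sum>m\<in>marks. mark_weight m) = (\<Sum>j\<in>{1..n}. \<Sum>v\<in>{0..2}. mark_weight (j, v))"
    unfolding marks_def by (simp add: sum.cartesian_product)
  also have "\<dots> = (\<Sum>j\<in>{1..n}. \<beta> 2 / urate)"
    by (intro sum.cong) (auto simp: sum_atLeastAtMost_0_2 mark_weight_site diff_divide_distrib)
  also have "\<dots> = 1"
    using sites_pos rate0_pos rate01 rate12 by (simp add: urate_def)
  finally show ?thesis .
qed

lemma skel_prob_0: "skel_prob 0 a b = (if a = b then 1 else 0)"
  by (simp add: skel_prob_def)

lemma skel_prob_Suc: "skel_prob (Suc i) a b = (\<Sum>m\<in>marks. mark_weight m * skel_prob i (fire a m) b)"
  by (simp add: skel_prob_def jump_op_def)

lemma skel_prob_bounds: "0 \<le> skel_prob i a b \<and> skel_prob i a b \<le> 1"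
proof (induction i arbitrary: a)
  case 0
  then show ?case by (simp add: skel_prob_0)
next
  case (Suc i)
  have "(\<Sum>m\<in>marks. mark_weight m * skel_prob i (fire a m) b) \<le> (\<Sum>m\<in>marks. mark_weight m)"
    by (intro sum_mono) (use Suc mark_weight_nonneg in \<open>auto intro: mult_left_le\<close>)
  moreover have "0 \<le> (\<Sum>m\<in>marks. mark_weight m * skel_prob i (fire a m) b)"
    by (intro sum_nonneg) (use Suc mark_weight_nonneg in auto)
  ultimately show ?case by (simp add: skel_prob_Suc sum_mark_weight)
qed

lemma jump_op_site:
  assumes j: "j \<in> {1..n}"
  shows "urate * (\<Sum>v\<in>{0..2}. mark_weight (j, v) * g (fire a (j, v)))
       = \<beta> (crystal_V j a) * g (a(j := a j + 1)) + (\<beta> 2 - \<beta> (crystal_V j a)) * g a"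
proof -
  have V: "crystal_V j a = 0 \<or> crystal_V j a = 1 \<or> crystal_V j a = 2"
    unfolding crystal_V_def by auto
  have fire_site: "fire a (j, v) = (if v \<le> 2 \<and> v \<le> crystal_V j a then a(j := a j + 1) else a)" for v
    using j by (auto simp: fire_def marks_def)
  have "urate * (\<Sum>v\<in>{0..2}. mark_weight (j, v) * g (fire a (j, v)))
     = \<beta> 0 * g (fire a (j, 0)) + (\<beta> 1 - \<beta> 0) * g (fire a (j, 1)) + (\<beta> 2 - \<beta> 1) * g (fire a (j, 2))"
    using j urate_pos by (simp add: sum_atLeastAtMost_0_2 mark_weight_site distrib_left)
  also have "\<dots> = \<beta> (crystal_V j a) * g (a(j := a j + 1)) + (\<beta> 2 - \<beta> (crystal_V j a)) * g a"
    using V by (elim disjE) (simp_all add: fire_site algebra_simps)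
  finally show ?thesis .
qed

lemma gen_op_eq_crystal_rates:
  "gen_op g a = (\<Sum>j\<in>{1..n}. \<beta> (crystal_V j a) * (g (a(j := a j + 1)) - g a))"
proof -
  have "urate * jump_op g a = (\<Sum>j\<in>{1..n}. urate * (\<Sum>v\<in>{0..2}. mark_weight (j, v) * g (fire a (j, v))))"
    unfolding jump_op_def marks_def by (simp add: sum.cartesian_product sum_distrib_left)
  also have "\<dots> = (\<Sum>j\<in>{1..n}. \<beta> (crystal_V j a) * g (a(j := a j + 1)) + (\<beta> 2 - \<beta> (crystal_V j a)) * g a)"
    by (intro sum.cong) (auto simp: jump_op_site)
  finally have "gen_op g a = \<dots> - (\<Sum>j\<in>{1..n}. \<beta> 2 * g a)"
    by (simp add: gen_op_def right_diff_distrib urate_def)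
  also have "\<dots> = (\<Sum>j\<in>{1..n}. \<beta> (crystal_V j a) * (g (a(j := a j + 1)) - g a))"
    unfolding sum_subtractf[symmetric] by (rule sum.cong) (simp_all add: algebra_simps)
  finally show ?thesis .
qed

lemma crystal_Qpow_eq_gen_op:
  "crystal_Qpow n \<beta> k a b = (gen_op ^^ k) (\<lambda>c. if c = b then 1 else 0) a"
  by (induction k arbitrary: a) (simp_all add: gen_op_eq_crystal_rates)

lemma jump_op_sum: "jump_op (\<lambda>c. \<Sum>i\<in>I. F i c) a = (\<Sum>i\<in>I. jump_op (F i) a)"
  unfolding jump_op_def by (simp add: sum_distrib_left sum.swap[of _ marks])

lemma jump_op_scale: "jump_op (\<lambda>c. r * F c) a = r * jump_op F a"
  unfolding jump_op_def by (simp add: sum_distrib_left algebra_simps)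

definition gen_coeff :: "nat \<Rightarrow> nat \<Rightarrow> real" where
  "gen_coeff k i = of_nat (k choose i) * (- urate) ^ (k - i) * urate ^ i"

lemma gen_coeff_Suc:
  "gen_coeff (Suc k) i = (if i = 0 then 0 else urate * gen_coeff k (i - 1)) + (- urate) * gen_coeff k i"
proof (cases i)
  case 0
  then show ?thesis by (simp add: gen_coeff_def)
next
  case (Suc j)
  show ?thesis
  proof (cases "j < k")
    case True
    then have "k - j = Suc (k - Suc j)" by simp
    then show ?thesis using Suc by (simp add: gen_coeff_def algebra_simps)
  next
    case False
    then have z: "k choose Suc j = 0" "k - j = 0" by simp_all
    then have "gen_coeff (Suc k) (Suc j) = of_nat (k choose j) * urate ^ Suc j"
      unfolding gen_coeff_def by simp
    also have "\<dots> = urate * gen_coeff k j + (- urate) * gen_coeff k (Suc j)"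
      unfolding gen_coeff_def using z by simp
    finally show ?thesis using Suc by simp
  qed
qed

lemma gen_coeff_eq_0: "k < i \<Longrightarrow> gen_coeff k i = 0"
  by (simp add: gen_coeff_def)

lemma gen_op_power_binomial: "(gen_op ^^ k) g a = (\<Sum>i\<le>k. gen_coeff k i * (jump_op ^^ i) g a)"
proof (induction k arbitrary: a)
  case 0
  then show ?case by (simp add: gen_coeff_def)
next
  case (Suc k)
  let ?J = "\<lambda>i. (jump_op ^^ i) g a"
  have IH: "(gen_op ^^ k) g = (\<lambda>c. \<Sum>i\<le>k. gen_coeff k i * (jump_op ^^ i) g c)"
    using Suc by auto
  have "(gen_op ^^ Suc k) g a = urate * ((\<Sum>i\<le>k. gen_coeff k i * ?J (Suc i)) - (\<Sum>i\<le>k. gen_coeff k i * ?J i))"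
    by (simp add: gen_op_def IH jump_op_sum jump_op_scale)
  also have "\<dots> = (\<Sum>i\<le>k. urate * gen_coeff k i * ?J (Suc i)) + (\<Sum>i\<le>k. (- urate) * gen_coeff k i * ?J i)"
    by (simp add: right_diff_distrib sum_distrib_left mult.assoc sum_negf)
  also have "(\<Sum>i\<le>k. urate * gen_coeff k i * ?J (Suc i))
      = (\<Sum>i\<le>Suc k. (if i = 0 then 0 else urate * gen_coeff k (i - 1)) * ?J i)"
    by (subst sum.atMost_Suc_shift) simp
  also have "(\<Sum>i\<le>k. (- urate) * gen_coeff k i * ?J i) = (\<Sum>i\<le>Suc k. (- urate) * gen_coeff k i * ?J i)"
    by (simp add: gen_coeff_eq_0)
  finally show ?case
    by (simp only: gen_coeff_Suc distrib_right sum.distrib)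
qed

lemma crystal_Qpow_eq_skel_prob:
  "crystal_Qpow n \<beta> k a b = (\<Sum>i\<le>k. gen_coeff k i * skel_prob i a b)"
  by (simp add: crystal_Qpow_eq_gen_op gen_op_power_binomial skel_prob_def)

lemma exp_cauchy_product_term:
  assumes "i \<le> k"
  shows "d ^ k / fact k * (gen_coeff k i * K)
       = ((urate * d) ^ i / fact i * K) * ((- urate * d) ^ (k - i) / fact (k - i))"
proof -
  have "d ^ k = d ^ i * d ^ (k - i)"
    using assms by (simp flip: power_add)
  then show ?thesis
    unfolding gen_coeff_def binomial_fact[OF assms] power_mult_distrib by (simp add: field_simps)
qed

lemma summable_unif_term: "summable (\<lambda>i. norm ((urate * d) ^ i / fact i * skel_prob (f i) a b))"
  using skel_prob_bounds by (intro summable_norm_exp_series_bounded) auto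

lemma crystal_P_eq_unif_prob: "crystal_P n \<beta> d a b = unif_prob d a b"
proof -
  let ?a = "\<lambda>i. (urate * d) ^ i / fact i * skel_prob i a b"
  let ?b = "\<lambda>j. (- urate * d) ^ j / fact j"
  have sb: "summable (\<lambda>j. norm (?b j))"
    using exp_series_sums[of "\<bar>urate * d\<bar>"] by (simp add: sums_summable power_abs abs_mult)
  have sa: "summable (\<lambda>i. norm (?a i))"
    using summable_unif_term[of d id] by simp
  have "crystal_P n \<beta> d a b = (\<Sum>k. \<Sum>i\<le>k. ?a i * ?b (k - i))"
    unfolding crystal_P_def crystal_Qpow_eq_skel_prob sum_distrib_left
    by (intro suminf_cong sum.cong refl) (rule exp_cauchy_product_term, simp)
  also have "\<dots> = suminf ?a * suminf ?b"
    using Cauchy_product[OF sa sb] by simp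
  also have "suminf ?b = exp (- urate * d)"
    using exp_series_sums sums_unique by metis
  finally show ?thesis by (simp add: unif_prob_def)
qed

lemma unif_prob_bounds:
  assumes "0 \<le> d"
  shows "0 \<le> unif_prob d a b" "unif_prob d a b \<le> 1"
proof -
  let ?a = "\<lambda>i. (urate * d) ^ i / fact i * skel_prob i a b"
  have sa: "summable ?a"
    using summable_unif_term[of d id] by (simp add: summable_norm_cancel)
  have nn: "0 \<le> ?a i" for i
    using assms urate_pos skel_prob_bounds by simp
  have "?a i \<le> (urate * d) ^ i / fact i" for i
    using skel_prob_bounds[of i a b] assms urate_pos by (intro mult_left_le) auto
  then have "suminf ?a \<le> (\<Sum>i. (urate * d) ^ i / fact i)"
    using sa exp_series_sums sums_summable by (intro suminf_le) auto
  also have "\<dots> = exp (urate * d)"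
    using exp_series_sums sums_unique by metis
  finally show "unif_prob d a b \<le> 1"
    by (simp add: unif_prob_def exp_minus field_simps)
  show "0 \<le> unif_prob d a b"
    unfolding unif_prob_def using suminf_nonneg[OF sa nn] by simp
qed

section \<open>The uniformized path\<close>

lemma nn_integral_mark_weight: "(\<integral>\<^sup>+m. ennreal (mark_weight m) \<partial>count_space UNIV) = 1"
proof -
  have "(\<integral>\<^sup>+m. ennreal (mark_weight m) \<partial>count_space UNIV) = (\<Sum>m\<in>marks. ennreal (mark_weight m))"
    by (rule nn_integral_count_space') (auto simp: mark_weight_def)
  also have "\<dots> = 1"
    using mark_weight_nonneg sum_mark_weight by simp
  finally show ?thesis .
qed

definition mark_pmf :: "(nat \<times> nat) pmf" where
  "mark_pmf = embed_pmf mark_weight"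

lemma pmf_mark_pmf: "pmf mark_pmf m = mark_weight m"
  unfolding mark_pmf_def by (rule pmf_embed_pmf[OF mark_weight_nonneg nn_integral_mark_weight])

lemma set_pmf_mark_pmf: "set_pmf mark_pmf \<subseteq> marks"
  unfolding mark_pmf_def set_embed_pmf[OF mark_weight_nonneg nn_integral_mark_weight]
  by (auto simp: mark_weight_def)

lemma nn_integral_mark_pmf:
  "(\<integral>\<^sup>+m. f m \<partial>measure_pmf mark_pmf) = (\<Sum>m\<in>marks. ennreal (mark_weight m) * f m)"
  using set_pmf_mark_pmf
  by (subst nn_integral_measure_pmf_support[of marks]) (auto simp: pmf_mark_pmf mult.commute)

definition hold_dens :: "real \<Rightarrow> real" where
  "hold_dens = exponential_density urate"

lemma hold_dens_nonneg: "0 \<le> hold_dens e"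
  unfolding hold_dens_def using urate_pos by (simp add: exponential_density_nonneg)

lemma hold_dens_measurable [measurable]: "hold_dens \<in> borel_measurable borel"
  unfolding hold_dens_def by simp

lemma nn_integral_hold_dens: "(\<integral>\<^sup>+e. ennreal (hold_dens e) \<partial>lborel) = 1"
  unfolding hold_dens_def using urate_pos by (rule nn_integral_exponential_density)

definition hold_dist :: "real measure" where
  "hold_dist = density lborel (\<lambda>e. ennreal (hold_dens e))"

lemma sets_hold_dist [measurable_cong]: "sets hold_dist = sets borel"
  by (simp add: hold_dist_def)

definition step_dist :: "(real \<times> (nat \<times> nat)) measure" where
  "step_dist = hold_dist \<Otimes>\<^sub>M measure_pmf mark_pmf"

lemma prob_space_step_dist: "prob_space step_dist"
  unfolding step_dist_def hold_dist_def hold_dens_def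
  using urate_pos by (intro prob_space_pair prob_space_exponential_density prob_space_measure_pmf)

lemma space_step_dist [simp]: "space step_dist = UNIV"
  by (simp add: step_dist_def space_pair_measure hold_dist_def)

lemma fst_measurable_step_dist [measurable]: "fst \<in> measurable step_dist borel"
  unfolding step_dist_def using measurable_fst[of hold_dist "measure_pmf mark_pmf"]
  by (simp add: measurable_cong_sets[OF refl sets_hold_dist])

lemma snd_measurable_step_dist [measurable]: "snd \<in> measurable step_dist (count_space UNIV)"
  unfolding step_dist_def using measurable_snd[of hold_dist "measure_pmf mark_pmf"] by simp

lemma borel_measurable_step_dist:
  assumes "\<And>m. (\<lambda>e. g (e, m)) \<in> borel_measurable borel"
  shows "g \<in> borel_measurable step_dist"
proof -
  have "(\<lambda>x. (\<lambda>m x. g (fst x, m)) (snd x) x) \<in> borel_measurable step_dist"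
    by (rule measurable_compose_countable'[where I=UNIV]) (use assms in auto)
  then show ?thesis by simp
qed

lemma nn_integral_step_dist:
  assumes "\<And>m. (\<lambda>e. g (e, m)) \<in> borel_measurable borel"
  shows "(\<integral>\<^sup>+x. g x \<partial>step_dist)
       = (\<integral>\<^sup>+e. ennreal (hold_dens e) * (\<Sum>m\<in>marks. ennreal (mark_weight m) * g (e, m)) \<partial>lborel)"
proof -
  have "g \<in> borel_measurable (hold_dist \<Otimes>\<^sub>M measure_pmf mark_pmf)"
    using borel_measurable_step_dist[OF assms] by (simp add: step_dist_def)
  then have "(\<integral>\<^sup>+x. g x \<partial>step_dist) = (\<integral>\<^sup>+e. \<integral>\<^sup>+m. g (e, m) \<partial>measure_pmf mark_pmf \<partial>hold_dist)"
    unfolding step_dist_def by (rule measure_pmf.nn_integral_fst[symmetric])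
  also have "\<dots> = (\<integral>\<^sup>+e. (\<Sum>m\<in>marks. ennreal (mark_weight m) * g (e, m)) \<partial>hold_dist)"
    by (simp add: nn_integral_mark_pmf)
  also have "\<dots> = (\<integral>\<^sup>+e. ennreal (hold_dens e) * (\<Sum>m\<in>marks. ennreal (mark_weight m) * g (e, m)) \<partial>lborel)"
    unfolding hold_dist_def using assms by (subst nn_integral_density) auto
  finally show ?thesis .
qed

definition steps :: "(real \<times> (nat \<times> nat)) stream measure" where
  "steps = stream_space step_dist"

lemma prob_space_steps: "prob_space steps"
  unfolding steps_def using prob_space.prob_space_stream_space[OF prob_space_step_dist] .

text \<open>Negative holding times have probability zero; clamping them at \<open>0\<close> makes the arrival
times nondecreasing on every stream, not only almost surely.\<close>

definition hold :: "real \<Rightarrow> real" where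
  "hold e = max 0 e"

definition step_hold :: "real \<times> (nat \<times> nat) \<Rightarrow> real" where
  "step_hold x = hold (fst x)"

lemma step_hold_nonneg: "0 \<le> step_hold x"
  by (simp add: step_hold_def hold_def)

lemma hold_measurable [measurable]: "hold \<in> borel_measurable borel"
  unfolding hold_def by simp

lemma step_hold_measurable [measurable]: "step_hold \<in> borel_measurable step_dist"
  unfolding step_hold_def by simp

definition arrival :: "nat \<Rightarrow> (real \<times> (nat \<times> nat)) stream \<Rightarrow> real" where
  "arrival k \<omega> = (\<Sum>i<k. step_hold (\<omega> !! i))"

lemma arrival_measurable [measurable]: "arrival k \<in> borel_measurable steps"
  unfolding arrival_def steps_def by measurable

lemma arrival_0 [simp]: "arrival 0 \<omega> = 0"
  by (simp add: arrival_def)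

lemma arrival_Suc_Stream: "arrival (Suc k) (x ## \<omega>) = step_hold x + arrival k \<omega>"
  unfolding arrival_def by (subst sum.lessThan_Suc_shift) simp

lemma arrival_mono: "k \<le> k' \<Longrightarrow> arrival k \<omega> \<le> arrival k' \<omega>"
  unfolding arrival_def by (rule sum_mono2) (auto simp: step_hold_nonneg)

definition unbounded_arrivals :: "(real \<times> (nat \<times> nat)) stream \<Rightarrow> bool" where
  "unbounded_arrivals \<omega> \<longleftrightarrow> (\<forall>N::nat. \<exists>k. real N < arrival k \<omega>)"

lemma unbounded_arrivals_measurable [measurable]: "Measurable.pred steps unbounded_arrivals"
  unfolding unbounded_arrivals_def by measurable

lemma unbounded_arrivals_iff: "unbounded_arrivals \<omega> \<longleftrightarrow> (\<forall>r. \<exists>k. r < arrival k \<omega>)"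
proof
  assume unb: "unbounded_arrivals \<omega>"
  show "\<forall>r. \<exists>k. r < arrival k \<omega>"
  proof
    fix r :: real
    obtain N :: nat where "r < real N"
      using reals_Archimedean2 by blast
    moreover obtain k where "real N < arrival k \<omega>"
      using unb unfolding unbounded_arrivals_def by blast
    ultimately show "\<exists>k. r < arrival k \<omega>" by (intro exI[of _ k]) simp
  qed
qed (auto simp: unbounded_arrivals_def)

lemma unbounded_arrivals_Stream: "unbounded_arrivals (x ## \<omega>) \<longleftrightarrow> unbounded_arrivals \<omega>"
proof
  assume unb: "unbounded_arrivals (x ## \<omega>)"
  show "unbounded_arrivals \<omega>" unfolding unbounded_arrivals_iff
  proof
    fix r
    obtain k where k: "\<bar>r\<bar> + step_hold x < arrival k (x ## \<omega>)"
      using unb unfolding unbounded_arrivals_iff by blast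
    then obtain k' where "k = Suc k'"
      using step_hold_nonneg[of x] by (cases k) auto
    with k have "r < arrival k' \<omega>"
      by (simp add: arrival_Suc_Stream)
    then show "\<exists>k. r < arrival k \<omega>" ..
  qed
next
  assume unb: "unbounded_arrivals \<omega>"
  show "unbounded_arrivals (x ## \<omega>)" unfolding unbounded_arrivals_iff
  proof
    fix r
    obtain k where "r < arrival k \<omega>"
      using unb unfolding unbounded_arrivals_iff by blast
    then have "r < arrival (Suc k) (x ## \<omega>)"
      using step_hold_nonneg[of x] by (simp add: arrival_Suc_Stream)
    then show "\<exists>k. r < arrival k (x ## \<omega>)" ..
  qed
qed

definition hold_laplace :: real where
  "hold_laplace = urate / (urate + 1)"

lemma hold_laplace_bounds: "0 \<le> hold_laplace" "hold_laplace < 1"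
  using urate_pos by (auto simp: hold_laplace_def)

lemma hold_dens_exp_neg_hold:
  "hold_dens e * exp (- hold e) = hold_laplace * exponential_density (urate + 1) e"
proof (cases "e < 0")
  case True
  then show ?thesis by (simp add: hold_dens_def exponential_density_def hold_def)
next
  case False
  have "exp (- e * urate) * exp (- e) = exp (- e * (urate + 1))"
    by (simp add: exp_add[symmetric] algebra_simps)
  moreover have "urate = (urate + 1) * hold_laplace"
    using urate_pos by (simp add: hold_laplace_def)
  ultimately show ?thesis
    using False unfolding hold_dens_def exponential_density_def hold_def
    by (simp add: mult.assoc mult.left_commute[of hold_laplace])
qed

lemma nn_integral_exp_neg_step_hold:
  "(\<integral>\<^sup>+x. ennreal (exp (- step_hold x)) \<partial>step_dist) = ennreal hold_laplace"
proof -
  have "(\<integral>\<^sup>+x. ennreal (exp (- step_hold x)) \<partial>step_dist)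
      = (\<integral>\<^sup>+e. ennreal (hold_dens e) * ennreal (exp (- hold e)) \<partial>lborel)"
    using nn_integral_step_dist[of "\<lambda>x. ennreal (exp (- step_hold x))"] mark_weight_nonneg
    by (simp add: step_hold_def sum_distrib_right[symmetric] ennreal_mult'[symmetric] sum_mark_weight)
  also have "\<dots> = (\<integral>\<^sup>+e. ennreal hold_laplace * ennreal (exponential_density (urate + 1) e) \<partial>lborel)"
    using hold_dens_nonneg hold_laplace_bounds(1)
    by (simp add: ennreal_mult'[symmetric] hold_dens_exp_neg_hold)
  also have "\<dots> = ennreal hold_laplace"
    using urate_pos by (simp add: nn_integral_cmult nn_integral_exponential_density)
  finally show ?thesis .
qed

lemma nn_integral_exp_neg_arrival:
  "(\<integral>\<^sup>+\<omega>. ennreal (exp (- arrival k \<omega>)) \<partial>steps) = ennreal hold_laplace ^ k"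
proof (induction k)
  case 0
  then show ?case using prob_space.emeasure_space_1[OF prob_space_steps] by simp
next
  case (Suc k)
  interpret step_dist: prob_space step_dist by (rule prob_space_step_dist)
  have [measurable]: "arrival (Suc k) \<in> borel_measurable (stream_space step_dist)"
    using arrival_measurable unfolding steps_def .
  have "(\<integral>\<^sup>+\<omega>. ennreal (exp (- arrival (Suc k) \<omega>)) \<partial>steps)
      = (\<integral>\<^sup>+x. \<integral>\<^sup>+\<omega>. ennreal (exp (- arrival (Suc k) (x ## \<omega>))) \<partial>steps \<partial>step_dist)"
    unfolding steps_def by (rule step_dist.nn_integral_stream_space) measurable
  also have "\<dots> = (\<integral>\<^sup>+x. ennreal (exp (- step_hold x)) * (\<integral>\<^sup>+\<omega>. ennreal (exp (- arrival k \<omega>)) \<partial>steps) \<partial>step_dist)"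
  proof (intro nn_integral_cong)
    fix x
    have "ennreal (exp (- arrival (Suc k) (x ## \<omega>))) = ennreal (exp (- step_hold x)) * ennreal (exp (- arrival k \<omega>))"
      for \<omega> by (simp add: arrival_Suc_Stream ennreal_mult'[symmetric] exp_add[symmetric])
    then show "(\<integral>\<^sup>+\<omega>. ennreal (exp (- arrival (Suc k) (x ## \<omega>))) \<partial>steps)
        = ennreal (exp (- step_hold x)) * (\<integral>\<^sup>+\<omega>. ennreal (exp (- arrival k \<omega>)) \<partial>steps)"
      by (simp add: nn_integral_cmult)
  qed
  also have "\<dots> = ennreal hold_laplace ^ Suc k"
    by (simp add: Suc nn_integral_multc nn_integral_exp_neg_step_hold)
  finally show ?case .
qed

lemma measure_arrivals_bounded_le:
  "measure steps {\<omega>\<in>space steps. \<forall>k. arrival k \<omega> \<le> B} \<le> exp B * hold_laplace ^ k"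
proof -
  let ?E = "{\<omega>\<in>space steps. arrival k \<omega> \<le> B}"
  have "indicator ?E \<omega> \<le> ennreal (exp B) * ennreal (exp (- arrival k \<omega>))" for \<omega>
    by (auto simp: indicator_def ennreal_mult'[symmetric] exp_add[symmetric] intro!: ennreal_leI)
  then have "(\<integral>\<^sup>+\<omega>. indicator ?E \<omega> \<partial>steps) \<le> (\<integral>\<^sup>+\<omega>. ennreal (exp B) * ennreal (exp (- arrival k \<omega>)) \<partial>steps)"
    by (intro nn_integral_mono) auto
  also have "\<dots> = ennreal (exp B * hold_laplace ^ k)"
    using hold_laplace_bounds
    by (simp add: nn_integral_cmult nn_integral_exp_neg_arrival ennreal_mult' ennreal_power)
  finally have "emeasure steps ?E \<le> ennreal (exp B * hold_laplace ^ k)"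
    by simp
  moreover have "emeasure steps {\<omega>\<in>space steps. \<forall>k. arrival k \<omega> \<le> B} \<le> emeasure steps ?E"
    by (rule emeasure_mono) auto
  ultimately show ?thesis
    using hold_laplace_bounds by (simp add: measure_def enn2real_leI)
qed

lemma AE_unbounded_arrivals: "AE \<omega> in steps. unbounded_arrivals \<omega>"
proof -
  interpret steps: prob_space steps by (rule prob_space_steps)
  have "AE \<omega> in steps. \<not> (\<forall>k. arrival k \<omega> \<le> real B)" for B :: nat
  proof -
    have "(\<lambda>k. exp (real B) * hold_laplace ^ k) \<longlonglongrightarrow> 0"
      using hold_laplace_bounds by (intro tendsto_mult_right_zero LIMSEQ_power_zero) simp
    then have "measure steps {\<omega>\<in>space steps. \<forall>k. arrival k \<omega> \<le> real B} \<le> 0"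
      by (rule LIMSEQ_le_const) (use measure_arrivals_bounded_le in auto)
    then have "{\<omega>\<in>space steps. \<forall>k. arrival k \<omega> \<le> real B} \<in> null_sets steps"
      by (intro null_setsI) (auto simp: steps.emeasure_eq_measure measure_le_0_iff)
    from AE_not_in[OF this] AE_space show ?thesis by eventually_elim blast
  qed
  then have "AE \<omega> in steps. \<forall>B::nat. \<not> (\<forall>k. arrival k \<omega> \<le> real B)"
    by (simp add: AE_all_countable)
  then show ?thesis
    by eventually_elim (auto simp: unbounded_arrivals_def not_le)
qed

primrec skel :: "nat \<Rightarrow> (nat \<Rightarrow> nat) \<Rightarrow> (real \<times> (nat \<times> nat)) stream \<Rightarrow> (nat \<Rightarrow> nat)" where
  "skel 0 a \<omega> = a"
| "skel (Suc k) a \<omega> = skel k (fire a (snd (shd \<omega>))) (stl \<omega>)"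

lemma skel_measurable: "skel k a \<in> measurable steps (count_space UNIV)"
proof (induction k arbitrary: a)
  case 0
  then show ?case by simp
next
  case (Suc k)
  have "(\<lambda>\<omega>. (\<lambda>m \<omega>. skel k (fire a m) (stl \<omega>)) (snd (shd \<omega>)) \<omega>) \<in> measurable steps (count_space UNIV)"
  proof (rule measurable_compose_countable'[where I=UNIV and f="\<lambda>m \<omega>. skel k (fire a m) (stl \<omega>)"
        and g="\<lambda>\<omega>. snd (shd \<omega>)"])
    fix m
    show "(\<lambda>\<omega>. skel k (fire a m) (stl \<omega>)) \<in> measurable steps (count_space UNIV)"
      unfolding steps_def by (rule measurable_compose[OF measurable_stl]) (rule Suc.IH[unfolded steps_def])
    show "(\<lambda>\<omega>. snd (shd \<omega>)) \<in> measurable steps (count_space UNIV)"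
      unfolding steps_def by measurable
  qed simp
  then show ?case by simp
qed

text \<open>The state at time \<open>t\<close> is the skeleton after the last arrival at or before \<open>t\<close>; on the null
set where arrivals accumulate the path is frozen at its starting point.\<close>

definition unif_path :: "real \<Rightarrow> (nat \<Rightarrow> nat) \<Rightarrow> (real \<times> (nat \<times> nat)) stream \<Rightarrow> (nat \<Rightarrow> nat)" where
  "unif_path t a \<omega> = (if unbounded_arrivals \<omega> then skel (LEAST k. t < arrival (Suc k) \<omega>) a \<omega> else a)"

lemma unif_path_measurable [measurable]: "unif_path t a \<in> measurable steps (count_space UNIV)"
proof -
  have "(\<lambda>\<omega>. (\<lambda>k \<omega>. if unbounded_arrivals \<omega> then skel k a \<omega> else a) (LEAST k. t < arrival (Suc k) \<omega>) \<omega>)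
      \<in> measurable steps (count_space UNIV)"
  proof (rule measurable_compose_countable'[where I=UNIV])
    fix k
    show "(\<lambda>\<omega>. if unbounded_arrivals \<omega> then skel k a \<omega> else a) \<in> measurable steps (count_space UNIV)"
      using skel_measurable[of k a] by measurable
    show "(\<lambda>\<omega>. LEAST k. t < arrival (Suc k) \<omega>) \<in> measurable steps (count_space UNIV)"
      by measurable
  qed simp
  then show ?thesis unfolding unif_path_def by simp
qed

lemma unif_path_Stream:
  assumes unb: "unbounded_arrivals \<omega>"
  shows "unif_path t a (x ## \<omega>) = (if t < step_hold x then a else unif_path (t - step_hold x) (fire a (snd x)) \<omega>)"
proof -
  have unb': "unbounded_arrivals (x ## \<omega>)"
    using unb unbounded_arrivals_Stream by simp
  show ?thesis
  proof (cases "t < step_hold x")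
    case True
    then have "(LEAST k. t < arrival (Suc k) (x ## \<omega>)) = 0"
      by (intro Least_eq_0) (simp add: arrival_Suc_Stream)
    then show ?thesis using True unb' by (simp add: unif_path_def)
  next
    case False
    obtain k where "t < arrival k (x ## \<omega>)"
      using unb' unfolding unbounded_arrivals_iff by blast
    then have ex: "t < arrival (Suc k) (x ## \<omega>)"
      using arrival_mono[of k "Suc k" "x ## \<omega>"] by simp
    have "(LEAST k. t < arrival (Suc k) (x ## \<omega>)) = Suc (LEAST m. t < arrival (Suc (Suc m)) (x ## \<omega>))"
      by (rule Least_Suc[of "\<lambda>k. t < arrival (Suc k) (x ## \<omega>)", OF ex])
        (use False in \<open>simp add: arrival_Suc_Stream\<close>)
    also have "\<dots> = Suc (LEAST m. t - step_hold x < arrival (Suc m) \<omega>)"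
      by (simp add: arrival_Suc_Stream algebra_simps)
    finally show ?thesis using False unb unb' by (simp add: unif_path_def)
  qed
qed

lemma unif_path_right_const:
  assumes "0 \<le> t"
  shows "\<exists>\<epsilon>>0. \<forall>s. t \<le> s \<and> s < t + \<epsilon> \<longrightarrow> unif_path s a \<omega> = unif_path t a \<omega>"
proof (cases "unbounded_arrivals \<omega>")
  case False
  then show ?thesis by (auto simp: unif_path_def intro!: exI[of _ 1])
next
  case unb: True
  define K where "K = (LEAST k. t < arrival (Suc k) \<omega>)"
  have "\<exists>k. t < arrival (Suc k) \<omega>"
    using unb arrival_mono[of _ "Suc _" \<omega>] unfolding unbounded_arrivals_iff
    by (meson le_SucI less_le_trans order_refl)
  then have K1: "t < arrival (Suc K) \<omega>"
    unfolding K_def by (rule LeastI_ex)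
  have K2: "\<not> t < arrival (Suc k) \<omega>" if "k < K" for k
    using that unfolding K_def by (rule not_less_Least)
  show ?thesis
  proof (intro exI[of _ "arrival (Suc K) \<omega> - t"] conjI allI impI)
    show "0 < arrival (Suc K) \<omega> - t"
      using K1 by simp
    fix s
    assume s: "t \<le> s \<and> s < t + (arrival (Suc K) \<omega> - t)"
    have "(LEAST k. s < arrival (Suc k) \<omega>) = K"
    proof (rule Least_equality)
      show "s < arrival (Suc K) \<omega>" using s by simp
      fix k
      assume "s < arrival (Suc k) \<omega>"
      then show "K \<le> k" using K2[of k] s by (meson le_less_trans not_le)
    qed
    then show "unif_path s a \<omega> = unif_path t a \<omega>"
      using unb by (simp add: unif_path_def K_def)
  qed
qed

lemma unif_path_left_const:
  assumes t: "0 < t"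
  shows "\<exists>\<epsilon>>0. \<forall>s r. t - \<epsilon> < s \<and> s < t \<and> t - \<epsilon> < r \<and> r < t \<longrightarrow> unif_path s a \<omega> = unif_path r a \<omega>"
proof (cases "unbounded_arrivals \<omega>")
  case False
  then show ?thesis by (auto simp: unif_path_def intro!: exI[of _ 1])
next
  case unb: True
  define K where "K = (LEAST k. t \<le> arrival (Suc k) \<omega>)"
  have "\<exists>k. t \<le> arrival (Suc k) \<omega>"
    using unb arrival_mono[of _ "Suc _" \<omega>] unfolding unbounded_arrivals_iff
    by (meson le_SucI less_le_trans order_refl less_imp_le)
  then have K1: "t \<le> arrival (Suc K) \<omega>"
    unfolding K_def by (rule LeastI_ex)
  have K2: "\<not> t \<le> arrival (Suc k) \<omega>" if "k < K" for k
    using that unfolding K_def by (rule not_less_Least)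
  have before: "arrival K \<omega> < t"
  proof (cases K)
    case (Suc j)
    then show ?thesis using K2[of j] by simp
  qed (use t in simp)
  have same_interval: "(LEAST k. s < arrival (Suc k) \<omega>) = K" if "arrival K \<omega> < s" "s < t" for s
  proof (rule Least_equality)
    show "s < arrival (Suc K) \<omega>"
      using that K1 by simp
    fix k
    assume k: "s < arrival (Suc k) \<omega>"
    show "K \<le> k"
    proof (rule ccontr)
      assume "\<not> K \<le> k"
      then have "arrival (Suc k) \<omega> \<le> arrival K \<omega>"
        by (intro arrival_mono) simp
      then show False using k that by simp
    qed
  qed
  show ?thesis
  proof (intro exI[of _ "t - arrival K \<omega>"] conjI allI impI)
    show "0 < t - arrival K \<omega>"
      using before by simp
    fix s r
    assume "t - (t - arrival K \<omega>) < s \<and> s < t \<and> t - (t - arrival K \<omega>) < r \<and> r < t"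
    then show "unif_path s a \<omega> = unif_path r a \<omega>"
      using unb same_interval[of s] same_interval[of r] by (simp add: unif_path_def)
  qed
qed

section \<open>The backward equation\<close>

lemma summable_unif_series: "summable (\<lambda>i. (urate * d) ^ i / fact i * skel_prob i a b)"
  using summable_unif_term[of d id] by (simp add: summable_norm_cancel)

lemma summable_unif_series_Suc: "summable (\<lambda>i. (urate * d) ^ i / fact i * skel_prob (Suc i) a b)"
  using summable_unif_term[of d Suc] by (simp add: summable_norm_cancel)

lemma sum_marks_unif_prob:
  "(\<Sum>m\<in>marks. mark_weight m * unif_prob d (fire a m) b)
     = exp (- urate * d) * (\<Sum>i. (urate * d) ^ i / fact i * skel_prob (Suc i) a b)"
proof -
  have "(\<Sum>m\<in>marks. mark_weight m * unif_prob d (fire a m) b)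
      = exp (- urate * d) * (\<Sum>m\<in>marks. \<Sum>i. mark_weight m * ((urate * d) ^ i / fact i * skel_prob i (fire a m) b))"
    unfolding unif_prob_def sum_distrib_left
    by (intro sum.cong refl, subst suminf_mult[OF summable_unif_series]) (simp only: mult.left_commute)
  also have "(\<Sum>m\<in>marks. \<Sum>i. mark_weight m * ((urate * d) ^ i / fact i * skel_prob i (fire a m) b))
      = (\<Sum>i. \<Sum>m\<in>marks. mark_weight m * ((urate * d) ^ i / fact i * skel_prob i (fire a m) b))"
    by (rule suminf_sum[symmetric]) (intro summable_mult summable_unif_series)
  also have "\<dots> = (\<Sum>i. (urate * d) ^ i / fact i * skel_prob (Suc i) a b)"
    by (intro suminf_cong) (simp add: skel_prob_Suc sum_distrib_left algebra_simps)
  finally show ?thesis .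
qed

lemma unif_prob_measurable [measurable]: "(\<lambda>d. unif_prob d a b) \<in> borel_measurable borel"
  unfolding unif_prob_def by measurable

text \<open>The density, at first-jump time \<open>e\<close>, of reaching \<open>b\<close> at time \<open>d\<close> after exactly \<open>i + 1\<close> jumps.\<close>

definition unif_jump_term :: "real \<Rightarrow> (nat \<Rightarrow> nat) \<Rightarrow> (nat \<Rightarrow> nat) \<Rightarrow> nat \<Rightarrow> real \<Rightarrow> real" where
  "unif_jump_term d a b i e = urate * exp (- urate * d) * ((urate * (d - e)) ^ i / fact i * skel_prob (Suc i) a b)"

lemma unif_jump_term_nonneg: "e \<le> d \<Longrightarrow> 0 \<le> unif_jump_term d a b i e"
  unfolding unif_jump_term_def using urate_pos skel_prob_bounds[of "Suc i" a b] by simp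

lemma summable_unif_jump_term: "summable (\<lambda>i. unif_jump_term d a b i e)"
  unfolding unif_jump_term_def by (intro summable_mult summable_unif_series_Suc)

lemma hold_dens_sum_marks_unif_prob:
  assumes "0 \<le> e" "e \<le> d"
  shows "ennreal (hold_dens e) * (\<Sum>m\<in>marks. ennreal (mark_weight m) * ennreal (unif_prob (d - hold e) (fire a m) b))
       = (\<Sum>i. ennreal (unif_jump_term d a b i e))"
proof -
  have "(\<Sum>m\<in>marks. ennreal (mark_weight m) * ennreal (unif_prob (d - e) (fire a m) b))
      = ennreal (\<Sum>m\<in>marks. mark_weight m * unif_prob (d - e) (fire a m) b)"
    using mark_weight_nonneg unif_prob_bounds(1)[of "d - e"] assms
    by (subst sum_ennreal[symmetric]) (auto intro!: sum_nonneg simp: ennreal_mult')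
  also have "\<dots> = ennreal (exp (- urate * (d - e)) * (\<Sum>i. (urate * (d - e)) ^ i / fact i * skel_prob (Suc i) a b))"
    by (simp add: sum_marks_unif_prob)
  finally have "ennreal (hold_dens e) * (\<Sum>m\<in>marks. ennreal (mark_weight m) * ennreal (unif_prob (d - e) (fire a m) b))
      = ennreal (hold_dens e * (exp (- urate * (d - e)) * (\<Sum>i. (urate * (d - e)) ^ i / fact i * skel_prob (Suc i) a b)))"
    using hold_dens_nonneg by (simp add: ennreal_mult')
  also have "hold_dens e * (exp (- urate * (d - e)) * (\<Sum>i. (urate * (d - e)) ^ i / fact i * skel_prob (Suc i) a b))
      = (\<Sum>i. unif_jump_term d a b i e)"
  proof -
    have "hold_dens e * exp (- urate * (d - e)) = urate * exp (- urate * d)"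
      using assms by (simp add: hold_dens_def exponential_density_def exp_add[symmetric] algebra_simps)
    then show ?thesis
      unfolding unif_jump_term_def by (subst suminf_mult[OF summable_unif_series_Suc]) (simp add: mult.assoc[symmetric])
  qed
  also have "ennreal (\<Sum>i. unif_jump_term d a b i e) = (\<Sum>i. ennreal (unif_jump_term d a b i e))"
    using unif_jump_term_nonneg[OF assms(2)] summable_unif_jump_term by (rule suminf_ennreal2[symmetric])
  finally show ?thesis
    using assms by (simp add: hold_def)
qed

lemma nn_integral_unif_jump_term:
  assumes "0 \<le> d"
  shows "(\<integral>\<^sup>+e. ennreal (unif_jump_term d a b i e) * indicator {0..d} e \<partial>lborel)
       = ennreal (exp (- urate * d) * skel_prob (Suc i) a b * (urate * d) ^ Suc i / fact (Suc i))"
proof -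
  define c where "c = - (exp (- urate * d) * skel_prob (Suc i) a b / fact (Suc i))"
  define F where "F e = c * (urate * (d - e)) ^ Suc i" for e
  have "DERIV F e :> unif_jump_term d a b i e" for e
  proof -
    have "DERIV (\<lambda>e. (urate * (d - e)) ^ Suc i) e :> (1 + of_nat i) * (- urate * (urate * (d - e)) ^ i)"
      by (rule DERIV_power_Suc) (auto intro!: derivative_eq_intros)
    then have "DERIV F e :> c * ((1 + of_nat i) * (- urate * (urate * (d - e)) ^ i))"
      unfolding F_def[abs_def] by (rule DERIV_cmult)
    also have "c * ((1 + of_nat i) * (- urate * (urate * (d - e)) ^ i)) = unif_jump_term d a b i e"
    proof -
      have "- (E * K / (c * f)) * (c * (- l * P)) = l * E * (P / f * K)"
        if "c \<noteq> 0" "f \<noteq> 0" for E K c f l P :: real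
        using that by (simp add: field_simps)
      then show ?thesis
        unfolding unif_jump_term_def c_def fact_Suc by (simp add: add.commute)
    qed
    finally show ?thesis .
  qed
  then have "(\<integral>\<^sup>+e. ennreal (unif_jump_term d a b i e) * indicator {0..d} e \<partial>lborel) = ennreal (F d - F 0)"
    using assms by (intro nn_integral_FTC_Icc unif_jump_term_nonneg) (auto simp: unif_jump_term_def)
  also have "F d - F 0 = exp (- urate * d) * skel_prob (Suc i) a b * (urate * d) ^ Suc i / fact (Suc i)"
    by (simp add: F_def c_def)
  finally show ?thesis .
qed

lemma nn_integral_first_jump_unif_prob:
  assumes d: "0 \<le> d"
  shows "(\<integral>\<^sup>+e. ennreal (hold_dens e) * indicator {..d} e
           * (\<Sum>m\<in>marks. ennreal (mark_weight m) * ennreal (unif_prob (d - hold e) (fire a m) b)) \<partial>lborel)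
       = ennreal (exp (- urate * d) * (\<Sum>i. (urate * d) ^ Suc i / fact (Suc i) * skel_prob (Suc i) a b))"
proof -
  let ?S = "\<lambda>i. exp (- urate * d) * ((urate * d) ^ Suc i / fact (Suc i) * skel_prob (Suc i) a b)"
  have summable: "summable (\<lambda>i. (urate * d) ^ Suc i / fact (Suc i) * skel_prob (Suc i) a b)"
    using summable_Suc_iff[THEN iffD2, OF summable_unif_series] .
  have "(\<integral>\<^sup>+e. ennreal (hold_dens e) * indicator {..d} e
         * (\<Sum>m\<in>marks. ennreal (mark_weight m) * ennreal (unif_prob (d - hold e) (fire a m) b)) \<partial>lborel)
      = (\<integral>\<^sup>+e. (\<Sum>i. ennreal (unif_jump_term d a b i e) * indicator {0..d} e) \<partial>lborel)"
  proof (rule nn_integral_cong)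
    fix e :: real
    show "ennreal (hold_dens e) * indicator {..d} e
           * (\<Sum>m\<in>marks. ennreal (mark_weight m) * ennreal (unif_prob (d - hold e) (fire a m) b))
        = (\<Sum>i. ennreal (unif_jump_term d a b i e) * indicator {0..d} e)"
      using hold_dens_sum_marks_unif_prob[of e d a b]
      by (cases "0 \<le> e \<and> e \<le> d") (auto simp: indicator_def hold_dens_def exponential_density_def)
  qed
  also have "\<dots> = (\<Sum>i. \<integral>\<^sup>+e. ennreal (unif_jump_term d a b i e) * indicator {0..d} e \<partial>lborel)"
    by (rule nn_integral_suminf) (unfold unif_jump_term_def, measurable)
  also have "\<dots> = (\<Sum>i. ennreal (?S i))"
    using nn_integral_unif_jump_term[OF d] by (simp add: algebra_simps)
  also have "\<dots> = ennreal (\<Sum>i. ?S i)"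
    using d urate_pos skel_prob_bounds summable by (intro suminf_ennreal2 summable_mult) auto
  also have "(\<Sum>i. ?S i) = exp (- urate * d) * (\<Sum>i. (urate * d) ^ Suc i / fact (Suc i) * skel_prob (Suc i) a b)"
    using summable by (rule suminf_mult)
  finally show ?thesis .
qed

lemma unif_prob_backward:
  assumes d: "0 \<le> d"
  shows "ennreal (unif_prob d a b) = ennreal (exp (- urate * d) * (if a = b then 1 else 0))
    + (\<integral>\<^sup>+e. ennreal (hold_dens e) * indicator {..d} e
         * (\<Sum>m\<in>marks. ennreal (mark_weight m) * ennreal (unif_prob (d - hold e) (fire a m) b)) \<partial>lborel)"
proof -
  let ?t = "\<lambda>i. (urate * d) ^ i / fact i * skel_prob i a b"
  have "(\<Sum>i. ?t i) = ?t 0 + (\<Sum>i. ?t (Suc i))"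
    using suminf_split_head[OF summable_unif_series] by simp
  then have "unif_prob d a b = exp (- urate * d) * (if a = b then 1 else 0) + exp (- urate * d) * (\<Sum>i. ?t (Suc i))"
    unfolding unif_prob_def by (simp add: distrib_left skel_prob_0)
  moreover have "0 \<le> (\<Sum>i. ?t (Suc i))"
    using d urate_pos skel_prob_bounds summable_Suc_iff[THEN iffD2, OF summable_unif_series]
    by (intro suminf_nonneg) auto
  ultimately show ?thesis
    by (simp add: nn_integral_first_jump_unif_prob[OF d])
qed

section \<open>Finite-dimensional distributions\<close>

text \<open>An observation list is a list of (time, state) pairs; \<open>fdd_prob a s zs\<close> is the probability,
according to \<open>unif_prob\<close>, of seeing them for the chain started in \<open>a\<close> at time \<open>s\<close>.\<close>

fun fdd_prob :: "(nat \<Rightarrow> nat) \<Rightarrow> real \<Rightarrow> (real \<times> (nat \<Rightarrow> nat)) list \<Rightarrow> real" where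
  "fdd_prob a s [] = 1"
| "fdd_prob a s (p # zs) = unif_prob (fst p - s) a (snd p) * fdd_prob (snd p) (fst p) zs"

definition obs_sorted_from :: "real \<Rightarrow> (real \<times> (nat \<Rightarrow> nat)) list \<Rightarrow> bool" where
  "obs_sorted_from s zs \<longleftrightarrow> sorted_wrt (\<lambda>p q. fst p < fst q) zs \<and> (\<forall>p\<in>set zs. s \<le> fst p)"

lemma obs_sorted_from_ConsD:
  "obs_sorted_from s (p # zs) \<Longrightarrow> s \<le> fst p \<and> obs_sorted_from (fst p) zs \<and> (\<forall>q\<in>set zs. fst p < fst q)"
  unfolding obs_sorted_from_def by auto

lemma obs_sorted_from_zip:
  "sorted_wrt (<) ts \<Longrightarrow> \<forall>t\<in>set ts. 0 \<le> t \<Longrightarrow> obs_sorted_from 0 (zip ts ys)"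
  unfolding obs_sorted_from_def by (auto simp: sorted_wrt_zip_fst dest: set_zip_leftD)

lemma fdd_prob_bounds: "obs_sorted_from s zs \<Longrightarrow> 0 \<le> fdd_prob a s zs \<and> fdd_prob a s zs \<le> 1"
proof (induction zs arbitrary: a s)
  case (Cons p zs)
  then have "s \<le> fst p" "obs_sorted_from (fst p) zs"
    using obs_sorted_from_ConsD by auto
  then show ?case
    using Cons.IH unif_prob_bounds[of "fst p - s" a "snd p"] by (simp add: mult_le_one)
qed simp

lemma fdd_prob_zip:
  "length ts = length ys \<Longrightarrow> fdd_prob a s (zip ts ys)
     = (\<Prod>i<length ts. unif_prob (ts ! i - (if i = 0 then s else ts ! (i - 1)))
          (if i = 0 then a else ys ! (i - 1)) (ys ! i))"
proof (induction ts arbitrary: ys a s)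
  case (Cons t ts)
  then obtain y ys' where ys: "ys = y # ys'" "length ts = length ys'"
    by (cases ys) auto
  have "fdd_prob a s (zip (t # ts) ys) = unif_prob (t - s) a y * fdd_prob y t (zip ts ys')"
    by (simp add: ys)
  then show ?case
    unfolding Cons.IH[OF ys(2)] length_Cons prod.lessThan_Suc_shift by (simp add: ys nth_Cons')
qed simp

lemma fdd_prob_filter_measurable:
  assumes [measurable]: "start \<in> borel_measurable borel" "threshold \<in> borel_measurable borel"
  shows "(\<lambda>e. fdd_prob b (start e) (filter (\<lambda>q. threshold e \<le> fst q) zs)) \<in> borel_measurable borel"
  using assms
proof (induction zs arbitrary: b start)
  case (Cons q zs)
  have [measurable]: "(\<lambda>e. fdd_prob (snd q) (fst q) (filter (\<lambda>q. threshold e \<le> fst q) zs)) \<in> borel_measurable borel"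
    using Cons.IH[of "\<lambda>_. fst q" "snd q"] Cons.prems by simp
  have [measurable]: "(\<lambda>e. fdd_prob b (start e) (filter (\<lambda>q. threshold e \<le> fst q) zs)) \<in> borel_measurable borel"
    using Cons.IH[of start b] Cons.prems by simp
  have [measurable]: "start \<in> borel_measurable borel"
    using Cons.prems by simp
  have "(\<lambda>e. fdd_prob b (start e) (filter (\<lambda>q. threshold e \<le> fst q) (q # zs)))
     = (\<lambda>e. if threshold e \<le> fst q
            then unif_prob (fst q - start e) b (snd q) * fdd_prob (snd q) (fst q) (filter (\<lambda>q. threshold e \<le> fst q) zs)
            else fdd_prob b (start e) (filter (\<lambda>q. threshold e \<le> fst q) zs))"
    by auto
  then show ?case by simp
qed simp

text \<open>First-step analysis: if the first holding time is \<open>e\<close>, every observation before \<open>s + hold e\<close>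
must show the starting state (\<open>obs_stay\<close>), and the remaining ones (\<open>obs_after\<close>) are observations
of the chain restarted at time \<open>s + hold e\<close>.\<close>

definition obs_stay :: "(nat \<Rightarrow> nat) \<Rightarrow> real \<Rightarrow> (real \<times> (nat \<Rightarrow> nat)) list \<Rightarrow> real \<Rightarrow> bool" where
  "obs_stay a s zs e \<longleftrightarrow> (\<forall>p\<in>set zs. fst p - s < hold e \<longrightarrow> snd p = a)"

definition obs_after :: "real \<Rightarrow> (real \<times> (nat \<Rightarrow> nat)) list \<Rightarrow> real \<Rightarrow> (real \<times> (nat \<Rightarrow> nat)) list" where
  "obs_after s zs e = filter (\<lambda>p. s + hold e \<le> fst p) zs"

lemma obs_stay_measurable [measurable]: "Measurable.pred borel (obs_stay a s zs)"
  unfolding obs_stay_def by measurable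

lemma obs_sorted_from_obs_after:
  "obs_sorted_from s zs \<Longrightarrow> obs_sorted_from (s + hold e) (obs_after s zs e)"
  unfolding obs_sorted_from_def obs_after_def by (auto simp: sorted_wrt_filter)

definition fdd_prob_step :: "(nat \<Rightarrow> nat) \<Rightarrow> real \<Rightarrow> (real \<times> (nat \<Rightarrow> nat)) list \<Rightarrow> real \<times> (nat \<times> nat) \<Rightarrow> ennreal" where
  "fdd_prob_step a s zs x =
     (if obs_stay a s zs (fst x)
      then ennreal (fdd_prob (fire a (snd x)) (s + step_hold x) (obs_after s zs (fst x))) else 0)"

lemma fdd_prob_step_measurable_hold [measurable]:
  "(\<lambda>e. fdd_prob_step a s zs (e, m)) \<in> borel_measurable borel"
proof -
  have [measurable]: "(\<lambda>e. fdd_prob (fire a m) (s + hold e) (filter (\<lambda>q. s + hold e \<le> fst q) zs))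
      \<in> borel_measurable borel"
    by (rule fdd_prob_filter_measurable) measurable
  have "(\<lambda>e. fdd_prob_step a s zs (e, m))
      = (\<lambda>e. if obs_stay a s zs e
             then ennreal (fdd_prob (fire a m) (s + hold e) (filter (\<lambda>q. s + hold e \<le> fst q) zs)) else 0)"
    by (simp add: fdd_prob_step_def step_hold_def obs_after_def fun_eq_iff)
  then show ?thesis by simp
qed

definition fdd_prob_marks :: "(nat \<Rightarrow> nat) \<Rightarrow> real \<Rightarrow> (real \<times> (nat \<Rightarrow> nat)) list \<Rightarrow> real \<Rightarrow> ennreal" where
  "fdd_prob_marks a s zs e = (\<Sum>m\<in>marks. ennreal (mark_weight m) * fdd_prob_step a s zs (e, m))"

lemma fdd_prob_marks_measurable [measurable]: "fdd_prob_marks a s zs \<in> borel_measurable borel"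
  unfolding fdd_prob_marks_def[abs_def] by measurable

lemma fdd_prob_marks_Nil: "fdd_prob_marks a s [] e = 1"
  using mark_weight_nonneg sum_mark_weight
  by (simp add: fdd_prob_marks_def fdd_prob_step_def obs_stay_def obs_after_def)

lemma fdd_prob_step_Cons_before:
  assumes "s \<le> t1" "\<forall>q\<in>set zs. t1 < fst q" "e \<le> t1 - s"
  shows "fdd_prob_step a s ((t1, y1) # zs) (e, m)
       = ennreal (unif_prob (t1 - s - hold e) (fire a m) y1) * ennreal (fdd_prob y1 t1 zs)"
proof -
  have hold: "hold e \<le> t1 - s"
    using assms by (simp add: hold_def)
  then have "obs_stay a s ((t1, y1) # zs) e"
    using assms unfolding obs_stay_def by force
  moreover have "obs_after s ((t1, y1) # zs) e = (t1, y1) # zs"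
    unfolding obs_after_def using assms hold by (auto intro!: filter_True)
  moreover have "0 \<le> unif_prob (t1 - s - hold e) (fire a m) y1"
    using hold by (intro unif_prob_bounds) simp
  ultimately show ?thesis
    unfolding fdd_prob_step_def by (simp add: step_hold_def ennreal_mult' diff_diff_eq)
qed

lemma fdd_prob_step_Cons_after:
  assumes "s \<le> t1" "\<forall>q\<in>set zs. t1 < fst q" "t1 - s < e"
  shows "fdd_prob_step a s ((t1, y1) # zs) (e, m) = (if y1 = a then fdd_prob_step a s zs (e, m) else 0)"
proof -
  have hold: "hold e = e"
    using assms by (simp add: hold_def)
  have "obs_stay a s ((t1, y1) # zs) e \<longleftrightarrow> y1 = a \<and> obs_stay a s zs e"
    using assms hold unfolding obs_stay_def by auto
  moreover have "obs_after s ((t1, y1) # zs) e = obs_after s zs e"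
    unfolding obs_after_def using assms hold by auto
  ultimately show ?thesis
    unfolding fdd_prob_step_def by auto
qed

lemma fdd_prob_marks_shift:
  assumes "0 < e" "0 \<le> d"
  shows "fdd_prob_marks a s zs (d + e) = fdd_prob_marks a (s + d) zs e"
proof -
  have hold: "hold (d + e) = d + e" "hold e = e"
    using assms by (auto simp: hold_def)
  have "obs_stay a s zs (d + e) = obs_stay a (s + d) zs e"
    unfolding obs_stay_def hold by (intro ball_cong refl) auto
  moreover have "obs_after s zs (d + e) = obs_after (s + d) zs e"
    unfolding obs_after_def hold by (intro filter_cong refl) auto
  ultimately have "fdd_prob_step a s zs (d + e, m) = fdd_prob_step a (s + d) zs (e, m)" for m
    unfolding fdd_prob_step_def by (simp add: step_hold_def hold add.assoc)
  then show ?thesis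
    by (simp add: fdd_prob_marks_def)
qed

text \<open>Memorylessness: conditioned on exceeding \<open>d\<close>, the first holding time is \<open>d\<close> plus a fresh one.\<close>

lemma nn_integral_hold_dens_after:
  assumes d: "0 \<le> d"
  shows "(\<integral>\<^sup>+e. ennreal (hold_dens e) * indicator {d<..} e * fdd_prob_marks a s zs e \<partial>lborel)
       = ennreal (exp (- urate * d)) * (\<integral>\<^sup>+e. ennreal (hold_dens e) * fdd_prob_marks a (s + d) zs e \<partial>lborel)"
proof -
  let ?f = "\<lambda>e. ennreal (hold_dens e) * indicator {d<..} e * fdd_prob_marks a s zs e"
  have "(\<integral>\<^sup>+e. ?f e \<partial>lborel) = (\<integral>\<^sup>+e. ?f e \<partial>distr lborel borel ((+) d))"
    by (simp add: lborel_distr_plus)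
  also have "\<dots> = (\<integral>\<^sup>+e. ?f (d + e) \<partial>lborel)"
    by (rule nn_integral_distr) simp_all
  also have "\<dots> = (\<integral>\<^sup>+e. ennreal (exp (- urate * d)) * (ennreal (hold_dens e) * fdd_prob_marks a (s + d) zs e) \<partial>lborel)"
  proof (rule nn_integral_cong_AE)
    show "AE e in lborel. ?f (d + e) = ennreal (exp (- urate * d)) * (ennreal (hold_dens e) * fdd_prob_marks a (s + d) zs e)"
      using AE_lborel_singleton[of 0]
    proof eventually_elim
      case (elim e)
      show ?case
      proof (cases "0 < e")
        case True
        have "hold_dens (d + e) = exp (- urate * d) * hold_dens e"
          using True d by (simp add: hold_dens_def exponential_density_def exp_add[symmetric] algebra_simps)
        then show ?thesis
          using True d by (simp add: fdd_prob_marks_shift indicator_def ennreal_mult' mult.assoc)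
      next
        case False
        then show ?thesis
          using elim by (simp add: indicator_def hold_dens_def exponential_density_def)
      qed
    qed
  qed
  also have "\<dots> = ennreal (exp (- urate * d)) * (\<integral>\<^sup>+e. ennreal (hold_dens e) * fdd_prob_marks a (s + d) zs e \<partial>lborel)"
    by (rule nn_integral_cmult) measurable
  finally show ?thesis .
qed

lemma hold_dens_fdd_prob_marks_Cons:
  assumes "s \<le> t1" "\<forall>q\<in>set zs. t1 < fst q"
  shows "ennreal (hold_dens e) * fdd_prob_marks a s ((t1, y1) # zs) e
       = ennreal (hold_dens e) * indicator {..t1 - s} e
           * (\<Sum>m\<in>marks. ennreal (mark_weight m) * ennreal (unif_prob (t1 - s - hold e) (fire a m) y1))
           * ennreal (fdd_prob y1 t1 zs)
         + ennreal (hold_dens e) * indicator {t1 - s<..} e * (if y1 = a then fdd_prob_marks a s zs e else 0)"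
proof (cases "e \<le> t1 - s")
  case True
  then show ?thesis
    using fdd_prob_step_Cons_before[OF assms True]
    by (simp add: fdd_prob_marks_def sum_distrib_right mult.assoc indicator_def)
next
  case False
  then show ?thesis
    using fdd_prob_step_Cons_after[OF assms] by (simp add: fdd_prob_marks_def indicator_def)
qed

lemma fdd_prob_first_step_hold:
  "obs_sorted_from s zs
   \<Longrightarrow> ennreal (fdd_prob a s zs) = (\<integral>\<^sup>+e. ennreal (hold_dens e) * fdd_prob_marks a s zs e \<partial>lborel)"
proof (induction zs arbitrary: a s)
  case Nil
  then show ?case by (simp add: fdd_prob_marks_Nil nn_integral_hold_dens)
next
  case (Cons p zs)
  obtain t1 y1 where p: "p = (t1, y1)"
    by (cases p)
  have sorted: "s \<le> t1" "obs_sorted_from t1 zs" "\<forall>q\<in>set zs. t1 < fst q"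
    using obs_sorted_from_ConsD[OF Cons.prems] p by auto
  define d where "d = t1 - s"
  have d: "0 \<le> d"
    using sorted by (simp add: d_def)
  define C where "C = ennreal (fdd_prob y1 t1 zs)"
  define J where "J e = (\<Sum>m\<in>marks. ennreal (mark_weight m) * ennreal (unif_prob (d - hold e) (fire a m) y1))" for e
  have [measurable]: "J \<in> borel_measurable borel"
    unfolding J_def[abs_def] by measurable
  have "(\<integral>\<^sup>+e. ennreal (hold_dens e) * fdd_prob_marks a s (p # zs) e \<partial>lborel)
      = (\<integral>\<^sup>+e. ennreal (hold_dens e) * indicator {..d} e * J e * C
          + ennreal (hold_dens e) * indicator {d<..} e * (if y1 = a then fdd_prob_marks a s zs e else 0) \<partial>lborel)"
    unfolding p J_def C_def d_def hold_dens_fdd_prob_marks_Cons[OF sorted(1,3)] ..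
  also have "\<dots> = (\<integral>\<^sup>+e. ennreal (hold_dens e) * indicator {..d} e * J e \<partial>lborel) * C
        + (\<integral>\<^sup>+e. ennreal (hold_dens e) * indicator {d<..} e * (if y1 = a then fdd_prob_marks a s zs e else 0) \<partial>lborel)"
    by (subst nn_integral_add) (auto simp: nn_integral_multc)
  also have "(\<integral>\<^sup>+e. ennreal (hold_dens e) * indicator {d<..} e * (if y1 = a then fdd_prob_marks a s zs e else 0) \<partial>lborel)
      = (if y1 = a then ennreal (exp (- urate * d)) * C else 0)"
  proof (cases "y1 = a")
    case True
    have "s + d = t1"
      by (simp add: d_def)
    then show ?thesis
      using True Cons.IH[OF sorted(2)] by (simp add: nn_integral_hold_dens_after[OF d] C_def)
  qed simp
  also have "(\<integral>\<^sup>+e. ennreal (hold_dens e) * indicator {..d} e * J e \<partial>lborel) * C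
        + (if y1 = a then ennreal (exp (- urate * d)) * C else 0)
      = ennreal (unif_prob d a y1) * C"
    unfolding unif_prob_backward[OF d, of a y1] J_def by (auto simp: distrib_right add.commute)
  also have "\<dots> = ennreal (fdd_prob a s (p # zs))"
    using unif_prob_bounds(1)[OF d] by (simp add: p d_def C_def ennreal_mult')
  finally show ?case ..
qed

lemma fdd_prob_first_step:
  "obs_sorted_from s zs \<Longrightarrow> ennreal (fdd_prob a s zs) = (\<integral>\<^sup>+x. fdd_prob_step a s zs x \<partial>step_dist)"
  by (subst nn_integral_step_dist) (simp_all add: fdd_prob_first_step_hold fdd_prob_marks_def)

definition fdd_event :: "(nat \<Rightarrow> nat) \<Rightarrow> real \<Rightarrow> (real \<times> (nat \<Rightarrow> nat)) list \<Rightarrow> (real \<times> (nat \<times> nat)) stream set" where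
  "fdd_event a s zs =
     {\<omega>\<in>space steps. unbounded_arrivals \<omega> \<and> (\<forall>p\<in>set zs. unif_path (fst p - s) a \<omega> = snd p)}"

lemma fdd_event_sets [measurable]: "fdd_event a s zs \<in> sets steps"
  unfolding fdd_event_def by measurable

lemma fdd_event_sets_stream_space [measurable]: "fdd_event a s zs \<in> sets (stream_space step_dist)"
  using fdd_event_sets by (simp add: steps_def)

definition fdd_emeasure :: "(nat \<Rightarrow> nat) \<Rightarrow> real \<Rightarrow> (real \<times> (nat \<Rightarrow> nat)) list \<Rightarrow> ennreal" where
  "fdd_emeasure a s zs = emeasure steps (fdd_event a s zs)"

lemma fdd_emeasure_Nil: "fdd_emeasure a s [] = 1"
proof -
  interpret steps: prob_space steps by (rule prob_space_steps)
  have "fdd_emeasure a s [] = emeasure steps (space steps)"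
    unfolding fdd_emeasure_def fdd_event_def using AE_unbounded_arrivals by (intro emeasure_eq_AE) auto
  then show ?thesis by (simp add: steps.emeasure_space_1)
qed

lemma fdd_emeasure_le_1: "fdd_emeasure a s zs \<le> 1"
proof -
  interpret steps: prob_space steps by (rule prob_space_steps)
  show ?thesis unfolding fdd_emeasure_def by (rule steps.emeasure_le_1)
qed

definition fdd_emeasure_step :: "(nat \<Rightarrow> nat) \<Rightarrow> real \<Rightarrow> (real \<times> (nat \<Rightarrow> nat)) list \<Rightarrow> real \<times> (nat \<times> nat) \<Rightarrow> ennreal" where
  "fdd_emeasure_step a s zs x =
     (if obs_stay a s zs (fst x)
      then fdd_emeasure (fire a (snd x)) (s + step_hold x) (obs_after s zs (fst x)) else 0)"

lemma fdd_event_Stream: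
  "{\<omega>\<in>space steps. x ## \<omega> \<in> fdd_event a s zs}
   = (if obs_stay a s zs (fst x) then fdd_event (fire a (snd x)) (s + step_hold x) (obs_after s zs (fst x)) else {})"
proof -
  have sp: "x ## \<omega> \<in> space steps \<longleftrightarrow> \<omega> \<in> space steps" for \<omega>
    by (simp add: steps_def stream_space_Stream)
  have obs: "(\<forall>p\<in>set zs. unif_path (fst p - s) a (x ## \<omega>) = snd p) \<longleftrightarrow>
      obs_stay a s zs (fst x) \<and>
      (\<forall>p\<in>set (obs_after s zs (fst x)). unif_path (fst p - (s + step_hold x)) (fire a (snd x)) \<omega> = snd p)"
    if "unbounded_arrivals \<omega>" for \<omega>
    using that by (auto simp: unif_path_Stream obs_stay_def obs_after_def step_hold_def diff_diff_eq)
  show ?thesis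
    using obs by (auto simp: fdd_event_def sp unbounded_arrivals_Stream)
qed

lemma fdd_emeasure_step_eq: "fdd_emeasure_step a s zs x = emeasure steps {\<omega>\<in>space steps. x ## \<omega> \<in> fdd_event a s zs}"
  unfolding fdd_emeasure_step_def fdd_emeasure_def fdd_event_Stream by simp

lemma fdd_emeasure_step_measurable: "fdd_emeasure_step a s zs \<in> borel_measurable step_dist"
proof -
  interpret steps: prob_space steps by (rule prob_space_steps)
  have eq: "fdd_emeasure_step a s zs x = (\<integral>\<^sup>+\<omega>. indicator (fdd_event a s zs) (x ## \<omega>) \<partial>steps)" for x
  proof -
    have "(\<integral>\<^sup>+\<omega>. indicator (fdd_event a s zs) (x ## \<omega>) \<partial>steps)
        = (\<integral>\<^sup>+\<omega>. indicator {\<omega>\<in>space steps. x ## \<omega> \<in> fdd_event a s zs} \<omega> \<partial>steps)"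
      by (rule nn_integral_cong) (auto split: split_indicator)
    also have "\<dots> = emeasure steps {\<omega>\<in>space steps. x ## \<omega> \<in> fdd_event a s zs}"
      by (rule nn_integral_indicator) (simp add: steps_def)
    finally show ?thesis by (simp add: fdd_emeasure_step_eq)
  qed
  have "(\<lambda>x. \<integral>\<^sup>+\<omega>. indicator (fdd_event a s zs) (x ## \<omega>) \<partial>steps) \<in> borel_measurable step_dist"
  proof -
    have "(\<lambda>p. indicator (fdd_event a s zs) (fst p ## snd p) :: ennreal) \<in> borel_measurable (step_dist \<Otimes>\<^sub>M steps)"
      unfolding steps_def by measurable
    then show ?thesis
      using steps.borel_measurable_nn_integral[of "\<lambda>x \<omega>. indicator (fdd_event a s zs) (x ## \<omega>)" step_dist]
      by (simp add: case_prod_beta')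
  qed
  then show ?thesis
    unfolding eq[abs_def] .
qed

lemma fdd_emeasure_first_step: "fdd_emeasure a s zs = (\<integral>\<^sup>+x. fdd_emeasure_step a s zs x \<partial>step_dist)"
proof -
  interpret step_dist: prob_space step_dist by (rule prob_space_step_dist)
  have "fdd_emeasure a s zs = (\<integral>\<^sup>+x. emeasure steps {\<omega>\<in>space steps. x ## \<omega> \<in> fdd_event a s zs} \<partial>step_dist)"
    unfolding fdd_emeasure_def steps_def by (rule step_dist.emeasure_stream_space) simp
  then show ?thesis by (simp add: fdd_emeasure_step_eq)
qed

lemma nn_integral_step_hold_le:
  assumes H: "0 \<le> H"
  shows "(\<integral>\<^sup>+x. indicator {x. step_hold x \<le> H} x \<partial>step_dist) = ennreal (1 - exp (- urate * H))"
proof -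
  have ind: "(\<lambda>e. indicator {x. step_hold x \<le> H} (e, m) :: ennreal) = indicator {e. hold e \<le> H}" for m
    by (auto simp: step_hold_def indicator_def)
  have "(\<integral>\<^sup>+x. indicator {x. step_hold x \<le> H} x \<partial>step_dist)
     = (\<integral>\<^sup>+e. ennreal (hold_dens e) * (\<Sum>m\<in>marks. ennreal (mark_weight m) * indicator {x. step_hold x \<le> H} (e, m)) \<partial>lborel)"
    by (rule nn_integral_step_dist) (unfold ind, measurable)
  also have "\<dots> = (\<integral>\<^sup>+e. ennreal (urate * exp (- urate * e)) * indicator {0..H} e \<partial>lborel)"
  proof (rule nn_integral_cong)
    fix e :: real
    have "(\<Sum>m\<in>marks. ennreal (mark_weight m) * indicator {x. step_hold x \<le> H} (e, m)) = indicator {e. hold e \<le> H} e"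
      using mark_weight_nonneg sum_mark_weight by (simp add: ind[THEN fun_cong] sum_distrib_right[symmetric])
    then show "ennreal (hold_dens e) * (\<Sum>m\<in>marks. ennreal (mark_weight m) * indicator {x. step_hold x \<le> H} (e, m))
        = ennreal (urate * exp (- urate * e)) * indicator {0..H} e"
      using H by (auto simp: indicator_def hold_dens_def exponential_density_def hold_def mult.commute)
  qed
  also have "\<dots> = ennreal ((- exp (- urate * H)) - (- exp (- urate * 0)))"
  proof (rule nn_integral_FTC_Icc)
    fix e :: real
    show "DERIV (\<lambda>e. - exp (- urate * e)) e :> urate * exp (- urate * e)"
      by (auto intro!: derivative_eq_intros)
    show "0 \<le> urate * exp (- urate * e)"
      using urate_pos by simp
  qed (use H in auto)
  finally show ?thesis by simp
qed

text \<open>\<open>fdd_emeasure\<close> and \<open>fdd_prob\<close> satisfy the same first-step recursion. Observations more than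
\<open>H\<close> after the start survive a step only if the holding time is at most \<open>H\<close>, which has probability
\<open>1 - e\<^sup>-\<^sup>\<lambda>\<^sup>H < 1\<close>; so \<open>k\<close> unfoldings bring the two within \<open>(1 - e\<^sup>-\<^sup>\<lambda>\<^sup>H)\<^sup>k\<close> of each other.\<close>

lemma fdd_step_close:
  assumes close: "\<And>a s zs. obs_sorted_from s zs \<Longrightarrow> \<forall>p\<in>set zs. fst p \<le> s + H \<Longrightarrow>
      fdd_emeasure a s zs \<le> ennreal (fdd_prob a s zs) + q \<and> ennreal (fdd_prob a s zs) \<le> fdd_emeasure a s zs + q"
    and sorted: "obs_sorted_from s zs" and horizon: "\<forall>p\<in>set zs. fst p \<le> s + H"
  shows "fdd_emeasure_step a s zs x \<le> fdd_prob_step a s zs x + q * indicator {x. step_hold x \<le> H} x \<and>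
         fdd_prob_step a s zs x \<le> fdd_emeasure_step a s zs x + q * indicator {x. step_hold x \<le> H} x"
proof (cases "obs_stay a s zs (fst x) \<and> step_hold x \<le> H")
  case True
  have "obs_sorted_from (s + step_hold x) (obs_after s zs (fst x))"
    using obs_sorted_from_obs_after[OF sorted] by (simp add: step_hold_def)
  moreover have "\<forall>p\<in>set (obs_after s zs (fst x)). fst p \<le> s + step_hold x + H"
    using horizon step_hold_nonneg[of x] by (auto simp: obs_after_def)
  ultimately show ?thesis
    using close True by (simp add: fdd_emeasure_step_def fdd_prob_step_def)
next
  case False
  moreover have "obs_after s zs (fst x) = []" if "H < step_hold x"
    using horizon that unfolding obs_after_def step_hold_def by (force simp: filter_empty_conv)
  ultimately show ?thesis
    by (auto simp: fdd_emeasure_step_def fdd_prob_step_def fdd_emeasure_Nil)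
qed

lemma fdd_emeasure_close:
  assumes H: "0 \<le> H"
  shows "obs_sorted_from s zs \<Longrightarrow> \<forall>p\<in>set zs. fst p \<le> s + H \<Longrightarrow>
    fdd_emeasure a s zs \<le> ennreal (fdd_prob a s zs) + ennreal (1 - exp (- urate * H)) ^ k \<and>
    ennreal (fdd_prob a s zs) \<le> fdd_emeasure a s zs + ennreal (1 - exp (- urate * H)) ^ k"
proof (induction k arbitrary: a s zs)
  case 0
  then show ?case
    using fdd_emeasure_le_1[of a s zs] fdd_prob_bounds[of s zs a]
    by (auto intro: order_trans add_increasing)
next
  case (Suc k)
  define q where "q = ennreal (1 - exp (- urate * H))"
  have [measurable]: "{x. step_hold x \<le> H} \<in> sets step_dist"
    using pred_le_const[OF step_hold_measurable, of H] by (simp add: pred_def)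
  have step: "fdd_emeasure_step a s zs x \<le> fdd_prob_step a s zs x + q ^ k * indicator {x. step_hold x \<le> H} x \<and>
      fdd_prob_step a s zs x \<le> fdd_emeasure_step a s zs x + q ^ k * indicator {x. step_hold x \<le> H} x" for x
    using Suc unfolding q_def by (intro fdd_step_close) auto
  have measurable: "fdd_emeasure_step a s zs \<in> borel_measurable step_dist" "fdd_prob_step a s zs \<in> borel_measurable step_dist"
    by (simp_all add: fdd_emeasure_step_measurable borel_measurable_step_dist)
  have "fdd_emeasure a s zs \<le> (\<integral>\<^sup>+x. fdd_prob_step a s zs x + q ^ k * indicator {x. step_hold x \<le> H} x \<partial>step_dist)"
    unfolding fdd_emeasure_first_step by (rule nn_integral_mono) (use step in auto)
  also have "\<dots> = (\<integral>\<^sup>+x. fdd_prob_step a s zs x \<partial>step_dist) + q ^ k * (\<integral>\<^sup>+x. indicator {x. step_hold x \<le> H} x \<partial>step_dist)"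
    using measurable by (subst nn_integral_add) (auto simp: nn_integral_cmult)
  also have "\<dots> = ennreal (fdd_prob a s zs) + q ^ Suc k"
    by (simp add: fdd_prob_first_step[OF Suc.prems(1)] nn_integral_step_hold_le[OF H] q_def mult.commute)
  finally have up: "fdd_emeasure a s zs \<le> ennreal (fdd_prob a s zs) + q ^ Suc k" .
  have "ennreal (fdd_prob a s zs)
      \<le> (\<integral>\<^sup>+x. fdd_emeasure_step a s zs x + q ^ k * indicator {x. step_hold x \<le> H} x \<partial>step_dist)"
    unfolding fdd_prob_first_step[OF Suc.prems(1)] by (rule nn_integral_mono) (use step in auto)
  also have "\<dots> = (\<integral>\<^sup>+x. fdd_emeasure_step a s zs x \<partial>step_dist) + q ^ k * (\<integral>\<^sup>+x. indicator {x. step_hold x \<le> H} x \<partial>step_dist)"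
    using measurable by (subst nn_integral_add) (auto simp: nn_integral_cmult)
  also have "\<dots> = fdd_emeasure a s zs + q ^ Suc k"
    by (simp add: fdd_emeasure_first_step[symmetric] nn_integral_step_hold_le[OF H] q_def mult.commute)
  finally show ?case
    using up by (simp add: q_def)
qed

lemma fdd_emeasure_eq_fdd_prob:
  assumes sorted: "obs_sorted_from s zs"
  shows "fdd_emeasure a s zs = ennreal (fdd_prob a s zs)"
proof -
  define H where "H = Max (insert 0 ((\<lambda>p. fst p - s) ` set zs))"
  have H: "0 \<le> H"
    unfolding H_def by (rule Max_ge) auto
  have horizon: "\<forall>p\<in>set zs. fst p \<le> s + H"
  proof
    fix p
    assume "p \<in> set zs"
    then have "fst p - s \<le> H"
      unfolding H_def by (intro Max_ge) auto
    then show "fst p \<le> s + H" by simp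
  qed
  define r where "r = 1 - exp (- urate * H)"
  have r: "0 \<le> r" "r < 1"
    using H urate_pos by (auto simp: r_def)
  obtain g where g: "fdd_emeasure a s zs = ennreal g" "0 \<le> g"
    using fdd_emeasure_le_1[of a s zs]
    by (metis ennreal_cases ennreal_one_less_top not_le)
  define c where "c = fdd_prob a s zs"
  have c: "0 \<le> c"
    using fdd_prob_bounds[OF sorted] by (simp add: c_def)
  have "g \<le> c + r ^ k \<and> c \<le> g + r ^ k" for k
  proof -
    have rk: "0 \<le> r ^ k" "ennreal r ^ k = ennreal (r ^ k)"
      using r by (simp_all add: ennreal_power)
    have "ennreal g \<le> ennreal c + ennreal (r ^ k)" "ennreal c \<le> ennreal g + ennreal (r ^ k)"
      using fdd_emeasure_close[OF H sorted horizon, of a k] g unfolding c_def r_def[symmetric] rk(2) by auto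
    then have "ennreal g \<le> ennreal (c + r ^ k)" "ennreal c \<le> ennreal (g + r ^ k)"
      using c g(2) rk(1) by simp_all
    then show ?thesis
      using c g(2) rk(1) by (simp del: ennreal_plus)
  qed
  then have "g = c"
    using r by (intro eq_if_within_powers) auto
  then show ?thesis
    using g by (simp add: c_def)
qed

section \<open>The monotone coupling\<close>

definition sites_le :: "(nat \<Rightarrow> nat) \<Rightarrow> (nat \<Rightarrow> nat) \<Rightarrow> bool" where
  "sites_le a b \<longleftrightarrow> (\<forall>j\<le>n + 1. a j \<le> b j)"

lemma fire_mono:
  assumes ab: "sites_le a b"
  shows "sites_le (fire a m) (fire b m)"
proof (cases "m \<in> marks")
  case False
  then show ?thesis using ab by (simp add: fire_def)
next
  case True
  obtain j v where m: "m = (j, v)"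
    by (cases m)
  have j: "1 \<le> j" "j \<le> n"
    using True m by (auto simp: marks_def)
  have "a j + 1 \<le> b j" if "v \<le> crystal_V j a" "\<not> v \<le> crystal_V j b"
  proof -
    have "a j \<noteq> b j"
    proof
      assume "a j = b j"
      then have "crystal_V j a \<le> crystal_V j b"
        using ab j by (intro crystal_V_mono) (auto simp: sites_le_def)
      then show False using that by simp
    qed
    moreover have "a j \<le> b j"
      using ab j by (simp add: sites_le_def)
    ultimately show ?thesis by simp
  qed
  then show ?thesis
    using ab True by (auto simp: fire_def m sites_le_def)
qed

lemma skel_mono: "sites_le a b \<Longrightarrow> sites_le (skel k a \<omega>) (skel k b \<omega>)"
  by (induction k arbitrary: a b \<omega>) (auto intro: fire_mono)

lemma unif_path_mono: "sites_le a b \<Longrightarrow> sites_le (unif_path t a \<omega>) (unif_path t b \<omega>)"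
  by (simp add: unif_path_def skel_mono)

lemma measure_unif_path_obs:
  assumes ts: "sorted_wrt (<) ts" "\<forall>t\<in>set ts. 0 \<le> t" and len: "length ys = length ts"
  shows "measure steps {\<omega>\<in>space steps. \<forall>i<length ts. unif_path (ts ! i) a \<omega> = ys ! i}
       = (\<Prod>i<length ts. crystal_P n \<beta> (ts ! i - (if i = 0 then 0 else ts ! (i - 1)))
            (if i = 0 then a else ys ! (i - 1)) (ys ! i))"
proof -
  have "(\<forall>p\<in>set (zip ts ys). unif_path (fst p - 0) a \<omega> = snd p) \<longleftrightarrow> (\<forall>i<length ts. unif_path (ts ! i) a \<omega> = ys ! i)" for \<omega>
    using len by (auto simp: set_zip)
  then have "emeasure steps {\<omega>\<in>space steps. \<forall>i<length ts. unif_path (ts ! i) a \<omega> = ys ! i} = fdd_emeasure a 0 (zip ts ys)"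
    unfolding fdd_emeasure_def fdd_event_def using AE_unbounded_arrivals by (intro emeasure_eq_AE) auto
  then have "measure steps {\<omega>\<in>space steps. \<forall>i<length ts. unif_path (ts ! i) a \<omega> = ys ! i} = fdd_prob a 0 (zip ts ys)"
    using fdd_emeasure_eq_fdd_prob fdd_prob_bounds obs_sorted_from_zip[OF ts] by (simp add: measure_def)
  then show ?thesis
    using len by (simp add: fdd_prob_zip crystal_P_eq_unif_prob)
qed

definition path_space :: "(real \<Rightarrow> nat \<Rightarrow> nat) measure" where
  "path_space = Pi\<^sub>M UNIV (\<lambda>_. count_space UNIV)"

definition coupled_paths ::
  "(nat \<Rightarrow> nat) \<Rightarrow> (nat \<Rightarrow> nat) \<Rightarrow> (real \<times> (nat \<times> nat)) stream \<Rightarrow> (real \<Rightarrow> nat \<Rightarrow> nat) \<times> (real \<Rightarrow> nat \<Rightarrow> nat)" where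
  "coupled_paths x y \<omega> = (\<lambda>t. unif_path t x \<omega>, \<lambda>t. unif_path t y \<omega>)"

text \<open>Restricting the path space to the image of \<open>coupled_paths\<close> makes every pathwise property
of the construction hold on the whole space, so no measurability of path properties is needed.\<close>

definition coupled_space ::
  "(nat \<Rightarrow> nat) \<Rightarrow> (nat \<Rightarrow> nat) \<Rightarrow> ((real \<Rightarrow> nat \<Rightarrow> nat) \<times> (real \<Rightarrow> nat \<Rightarrow> nat)) measure" where
  "coupled_space x y = restrict_space (path_space \<Otimes>\<^sub>M path_space) (coupled_paths x y ` space steps)"

definition coupling :: "(nat \<Rightarrow> nat) \<Rightarrow> (nat \<Rightarrow> nat) \<Rightarrow> ((real \<Rightarrow> nat \<Rightarrow> nat) \<times> (real \<Rightarrow> nat \<Rightarrow> nat)) measure" where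
  "coupling x y = distr steps (coupled_space x y) (coupled_paths x y)"

lemma space_coupling: "space (coupling x y) = coupled_paths x y ` space steps"
  by (simp add: coupling_def coupled_space_def space_restrict_space space_pair_measure path_space_def space_PiM)

lemma coupled_paths_measurable: "coupled_paths x y \<in> measurable steps (coupled_space x y)"
  unfolding coupled_space_def
proof (rule measurable_restrict_space2)
  show "coupled_paths x y \<in> measurable steps (path_space \<Otimes>\<^sub>M path_space)"
    unfolding coupled_paths_def path_space_def by (intro measurable_Pair measurable_PiM_single') auto
qed auto

lemma prob_space_coupling: "prob_space (coupling x y)"
  unfolding coupling_def by (rule prob_space.prob_space_distr[OF prob_space_steps coupled_paths_measurable])

lemma crystal_process_coupling:
  assumes pr: "pr \<in> measurable (path_space \<Otimes>\<^sub>M path_space) path_space"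
    and pr_coupled: "\<And>\<omega>. pr (coupled_paths x y \<omega>) = (\<lambda>t. unif_path t a \<omega>)"
  shows "crystal_process n \<beta> (coupling x y) (\<lambda>t \<omega>. pr \<omega> t) a"
  unfolding crystal_process_def
proof (intro conjI allI impI)
  have coord [measurable]: "(\<lambda>\<omega>. pr \<omega> t) \<in> measurable (coupled_space x y) (count_space UNIV)" for t
    unfolding coupled_space_def path_space_def
    by (intro measurable_restrict_space1 measurable_compose[OF pr[unfolded path_space_def]] measurable_component_singleton) simp
  then show "(\<lambda>\<omega>. pr \<omega> t) \<in> measurable (coupling x y) (count_space UNIV)" for t
    unfolding coupling_def measurable_distr_eq1 .
  fix ts :: "real list" and ys :: "(nat \<Rightarrow> nat) list"
  assume ts: "sorted_wrt (<) ts" "\<forall>t\<in>set ts. 0 \<le> t" and len: "length ys = length ts"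
  let ?B = "{\<omega> \<in> space (coupled_space x y). \<forall>i<length ts. pr \<omega> (ts ! i) = ys ! i}"
  have "?B \<in> sets (coupled_space x y)"
    by measurable
  then have "measure (coupling x y) ?B = measure steps (coupled_paths x y -` ?B \<inter> space steps)"
    unfolding coupling_def by (rule measure_distr[OF coupled_paths_measurable])
  also have "coupled_paths x y -` ?B \<inter> space steps
      = {\<omega>\<in>space steps. \<forall>i<length ts. unif_path (ts ! i) a \<omega> = ys ! i}"
    by (auto simp: space_coupling[unfolded coupling_def, simplified] pr_coupled)
  finally show "measure (coupling x y) {\<omega> \<in> space (coupling x y). \<forall>i<length ts. pr \<omega> (ts ! i) = ys ! i}
      = (\<Prod>i<length ts. crystal_P n \<beta> (ts ! i - (if i = 0 then 0 else ts ! (i - 1)))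
            (if i = 0 then a else ys ! (i - 1)) (ys ! i))"
    using measure_unif_path_obs[OF ts len] by (simp add: coupling_def)
next
  show "AE \<omega> in coupling x y.
        (\<forall>t\<ge>0. \<exists>\<epsilon>>0. \<forall>s. t \<le> s \<and> s < t + \<epsilon> \<longrightarrow> pr \<omega> s = pr \<omega> t) \<and>
        (\<forall>t>0. \<exists>\<epsilon>>0. \<forall>s r. t - \<epsilon> < s \<and> s < t \<and> t - \<epsilon> < r \<and> r < t \<longrightarrow> pr \<omega> s = pr \<omega> r)"
    using unif_path_right_const unif_path_left_const
    by (intro AE_I2) (auto simp: space_coupling pr_coupled)
qed

end

theorem lemma3:
  fixes n :: nat and \<beta> :: "nat \<Rightarrow> real" and x y :: "nat \<Rightarrow> nat"
  assumes "2 \<le> n"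
    and "0 < \<beta> 0" and "0 < \<beta> 1" and "0 < \<beta> 2"
    and "\<beta> 0 \<le> \<beta> 1" and "\<beta> 1 \<le> \<beta> 2"
    and "x \<in> crystal_states n" and "y \<in> crystal_states n"
    and "\<forall>j\<in>{1..n}. x j \<le> y j"
  shows "\<exists>\<mu> :: ((real \<Rightarrow> nat \<Rightarrow> nat) \<times> (real \<Rightarrow> nat \<Rightarrow> nat)) measure.
           prob_space \<mu> \<and>
           crystal_process n \<beta> \<mu> (\<lambda>t \<omega>. fst \<omega> t) x \<and>
           crystal_process n \<beta> \<mu> (\<lambda>t \<omega>. snd \<omega> t) y \<and>
           (AE \<omega> in \<mu>. \<forall>t\<ge>0. \<forall>j\<in>{1..n}. fst \<omega> t j \<le> snd \<omega> t j)"
proof -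
  interpret crystal_uniformization n \<beta>
    using assms(1,2,5,6) by unfold_locales auto
  have "sites_le x y"
    unfolding sites_le_def
  proof (intro allI impI)
    fix j
    assume "j \<le> n + 1"
    then consider "j = 0" | "j = n + 1" | "j \<in> {1..n}"
      by force
    then show "x j \<le> y j"
      using assms(7-9) by cases (auto simp: crystal_states_def)
  qed
  then have "AE \<omega> in coupling x y. \<forall>t\<ge>0. \<forall>j\<in>{1..n}. fst \<omega> t j \<le> snd \<omega> t j"
    using unif_path_mono by (intro AE_I2) (auto simp: space_coupling coupled_paths_def sites_le_def)
  moreover have "crystal_process n \<beta> (coupling x y) (\<lambda>t \<omega>. fst \<omega> t) x"
    "crystal_process n \<beta> (coupling x y) (\<lambda>t \<omega>. snd \<omega> t) y"
    by (rule crystal_process_coupling; simp add: coupled_paths_def)+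
  ultimately show ?thesis
    using prob_space_coupling by blast
qed

end
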